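(* Let $H:\mathbb{R}^{2n}\to\mathbb{R}$ be smooth, let $\phi_h$ be the time-$h$ flow of $\dot y=J^{-1}\nabla H(y)$, and let $y^*\in\mathbb{R}^{2n}$ be a point at which the $2n\times 2n$ matrix $S(y^* )\,J^{-1}\,S(y^* )$ is nonzero, where $S=\nabla^2 H$ is the Hessian of $H$. (For $n=1$ this condition is $\partial_{pp}H\,\partial_{qq}H-(\partial_{pq}H)^2\neq 0$ at $y^*$.) Then there exists $h_0>0$ such that for every $h\in(0,h_0)$ and every open neighborhood $W$ of $y^*$ there is no $C^2$ function $\hat H:W\to\mathbb{R}$ satisfying $$J^{-1}\nabla \hat H(y_0)=\frac{\phi_h(y_0)-y_0}{h}\quad\text{for all } y_0\in W,$$ i.e. satisfying $-\nabla_q\hat H(p_0,q_0)=\frac{p_1-p_0}{h}$ and $\nabla_p\hat H(p_0,q_0)=\frac{q_1-q_0}{h}$ for all $(p_0,q_0)\in W$, where $(p_1,q_1)=\phi_h(p_0,q_0)$. More precisely, the field $G_h(y)=J\,\frac{\phi_h(y)-y}{h}$ has Jacobian whose antisymmetric part equals $\frac{h}{2}S J^{-1}S+O(h^2)$ locally uniformly near $y^*$.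
   Context: Points are written $y=(p,q)$, $p,q\in\mathbb{R}^n$. $J=\begin{pmatrix}0 & I_n\\ -I_n & 0\end{pmatrix}$, so $J^{-1}\nabla H=(-\nabla_qH,\nabla_pH)$ and Hamilton's equations read $\dot p=-\nabla_qH$, $\dot q=\nabla_pH$. This is the statement that the forward-Euler-based loss $\big\|\frac{y_1-y_0}{h}-J^{-1}\nabla\hat H(y_0)\big\|^2$ cannot vanish identically on an open set. *)

theory Defs
  imports "HOL-Analysis.Analysis"
begin

text \<open>Phase space R^{2n} is modelled as (real^'n) \<times> (real^'n), a point being y = (p,q).\<close>

definition pdiff :: "'a::euclidean_space \<Rightarrow> ('a \<Rightarrow> real) \<Rightarrow> 'a \<Rightarrow> real" where
  "pdiff v f x = deriv (\<lambda>t. f (x + t *\<^sub>R v)) 0"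

fun ipd :: "'a::euclidean_space list \<Rightarrow> ('a \<Rightarrow> real) \<Rightarrow> 'a \<Rightarrow> real" where
  "ipd [] f = f"
| "ipd (v # vs) f = pdiff v (ipd vs f)"

definition Ck_on :: "nat \<Rightarrow> 'a::euclidean_space set \<Rightarrow> ('a \<Rightarrow> real) \<Rightarrow> bool" where
  "Ck_on k S f \<longleftrightarrow>
     (\<forall>vs. set vs \<subseteq> Basis \<and> length vs \<le> k \<longrightarrow> continuous_on S (ipd vs f)) \<and>
     (\<forall>vs v x. set vs \<subseteq> Basis \<and> length vs < k \<and> v \<in> Basis \<and> x \<in> S \<longrightarrow>
        (\<lambda>t. ipd vs f (x + t *\<^sub>R v)) differentiable (at 0))"

definition smooth :: "('a::euclidean_space \<Rightarrow> real) \<Rightarrow> bool" where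
  "smooth f \<longleftrightarrow> (\<forall>k. Ck_on k UNIV f)"

definition grad :: "('a::euclidean_space \<Rightarrow> real) \<Rightarrow> 'a \<Rightarrow> 'a" where
  "grad f x = (\<Sum>b\<in>Basis. pdiff b f x *\<^sub>R b)"

definition hess :: "('a::euclidean_space \<Rightarrow> real) \<Rightarrow> 'a \<Rightarrow> 'a \<Rightarrow> 'a" where
  "hess f x v = (\<Sum>b\<in>Basis. (\<Sum>c\<in>Basis. (v \<bullet> c) * pdiff c (pdiff b f) x) *\<^sub>R b)"

text \<open>J = [[0, I],[-I, 0]] and J^{-1} = [[0,-I],[I,0]] acting on (p,q).\<close>
definition Jmat :: "(real^'n) \<times> (real^'n) \<Rightarrow> (real^'n) \<times> (real^'n)" where
  "Jmat y = (snd y, - fst y)"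

definition Jinv :: "(real^'n) \<times> (real^'n) \<Rightarrow> (real^'n) \<times> (real^'n)" where
  "Jinv y = (- snd y, fst y)"

definition flow_sol :: "((real^'n) \<times> (real^'n) \<Rightarrow> real) \<Rightarrow> (real^'n) \<times> (real^'n) \<Rightarrow> real
     \<Rightarrow> (real \<Rightarrow> (real^'n) \<times> (real^'n)) \<Rightarrow> bool" where
  "flow_sol H y0 h x \<longleftrightarrow> x 0 = y0 \<and>
     (\<forall>t\<in>{0..h}. (x has_vector_derivative Jinv (grad H (x t))) (at t within {0..h}))"

text \<open>Time-h flow map phi_h(y0) (meaningful where the solution exists and is unique).\<close>
definition flow :: "((real^'n) \<times> (real^'n) \<Rightarrow> real) \<Rightarrow> real \<Rightarrow> (real^'n) \<times> (real^'n)
     \<Rightarrow> (real^'n) \<times> (real^'n)" where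
  "flow H h y0 = (THE z. \<exists>x. flow_sol H y0 h x \<and> x h = z)"

end

theory Submission
  imports Defs
begin

text \<open>The time-\<open>h\<close> flow \<open>\<phi>\<^sub>h\<close> of a Hamiltonian system is symplectic and its derivative is
  \<open>I + h J\<^sup>-\<^sup>1 S + O(h\<^sup>2)\<close>, where \<open>S\<close> is the Hessian of \<open>H\<close>. Writing \<open>D\<phi>\<^sub>h = I + h K\<close>,
  symplecticity \<open>K\<^sup>T J + J K + h K\<^sup>T J K = 0\<close> shows that the antisymmetric part of \<open>J K\<close>, the
  derivative of the field \<open>G\<^sub>h = J (\<phi>\<^sub>h - id) / h\<close>, is \<open>(h/2) S J\<^sup>-\<^sup>1 S + O(h\<^sup>2)\<close>. A gradient
  field has a symmetric derivative, so for small \<open>h\<close> the field \<open>G\<^sub>h\<close> is not the gradient of a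
  \<open>C\<^sup>2\<close> function near a point where \<open>S J\<^sup>-\<^sup>1 S \<noteq> 0\<close>. Existence, uniqueness and
  differentiability of the flow come from Picard iteration and Gronwall's inequality, the
  symmetry of the Hessian from Clairaut's theorem.\<close>

section \<open>Partial derivatives\<close>

lemma pdiff_has_real_derivative:
  assumes "(\<lambda>t. g (z + t *\<^sub>R v)) differentiable (at 0)"
  shows "((\<lambda>t. g (z + t *\<^sub>R v)) has_real_derivative pdiff v g z) (at 0)"
  using assms unfolding pdiff_def by (simp add: DERIV_deriv_iff_real_differentiable)

lemma pdiff_has_real_derivative_along_line:
  assumes "(\<lambda>t. g ((z + \<tau> *\<^sub>R v) + t *\<^sub>R v)) differentiable (at 0)"
  shows "((\<lambda>\<tau>. g (z + \<tau> *\<^sub>R v)) has_real_derivative pdiff v g (z + \<tau> *\<^sub>R v)) (at \<tau>)"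
proof -
  have "((\<lambda>t. g ((z + \<tau> *\<^sub>R v) + t *\<^sub>R v)) has_real_derivative pdiff v g (z + \<tau> *\<^sub>R v)) (at 0)"
    by (rule pdiff_has_real_derivative[OF assms])
  moreover have "(\<lambda>t. g ((z + \<tau> *\<^sub>R v) + t *\<^sub>R v)) = (\<lambda>t. (\<lambda>s. g (z + s *\<^sub>R v)) (t + \<tau>))"
    by (simp add: algebra_simps)
  ultimately show ?thesis using DERIV_shift[of "\<lambda>s. g (z + s *\<^sub>R v)" _ 0 \<tau>] by simp
qed

lemma MVT_signed:
  fixes \<psi> :: "real \<Rightarrow> real"
  assumes "\<And>\<tau>. \<bar>\<tau>\<bar> \<le> \<bar>s\<bar> \<Longrightarrow> (\<psi> has_real_derivative \<psi>' \<tau>) (at \<tau>)"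
  shows "\<exists>\<tau>. \<bar>\<tau>\<bar> \<le> \<bar>s\<bar> \<and> \<psi> s - \<psi> 0 = s * \<psi>' \<tau>"
proof (cases "0 < s")
  case True
  obtain z where "0 < z" "z < s" "\<psi> s - \<psi> 0 = (s - 0) * \<psi>' z"
    using MVT2[OF True, of \<psi> \<psi>'] assms by force
  then show ?thesis by (intro exI[of _ z]) auto
next
  case False
  show ?thesis
  proof (cases "s = 0")
    case False
    with \<open>\<not> 0 < s\<close> have "s < 0" by auto
    obtain z where "s < z" "z < 0" "\<psi> 0 - \<psi> s = (0 - s) * \<psi>' z"
      using MVT2[OF \<open>s < 0\<close>, of \<psi> \<psi>'] assms by force
    then show ?thesis by (intro exI[of _ z]) (auto simp: algebra_simps)
  qed auto
qed

lemma finite_family_close_near: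
  fixes x :: "'a::metric_space"
  assumes "open S" "x \<in> S" "finite I" "\<And>i. i \<in> I \<Longrightarrow> continuous_on S (f i)" "e > 0"
  shows "\<exists>d>0. \<forall>z. dist z x < d \<longrightarrow> z \<in> S \<and> (\<forall>i\<in>I. dist (f i z) (f i x) < (e::real))"
proof -
  have "\<forall>\<^sub>F z in at x. \<forall>i\<in>I. dist (f i z) (f i x) < e"
  proof (rule eventually_ball_finite[OF assms(3)], intro ballI)
    fix i assume "i \<in> I"
    then have "isCont (f i) x" using assms continuous_on_eq_continuous_at by blast
    then show "\<forall>\<^sub>F z in at x. dist (f i z) (f i x) < e"
      using assms(5) unfolding isCont_def by (rule tendstoD)
  qed
  moreover have "\<forall>\<^sub>F z in at x. z \<in> S"
    using assms(1,2) eventually_at_topological by blast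
  ultimately have "\<forall>\<^sub>F z in at x. z \<in> S \<and> (\<forall>i\<in>I. dist (f i z) (f i x) < e)"
    by (auto elim: eventually_elim2)
  then obtain d where "d > 0"
    and "\<And>z. z \<noteq> x \<Longrightarrow> dist z x < d \<Longrightarrow> z \<in> S \<and> (\<forall>i\<in>I. dist (f i z) (f i x) < e)"
    unfolding eventually_at by auto
  then show ?thesis using assms(2,5) by (intro exI[of _ d]) (metis dist_self)
qed

lemma norm_sum_Basis_subset_le:
  fixes v :: "'a::euclidean_space"
  assumes "T \<subseteq> Basis"
  shows "norm (\<Sum>b\<in>T. (v \<bullet> b) *\<^sub>R b) \<le> real (card T) * norm v"
proof -
  have "norm (\<Sum>b\<in>T. (v \<bullet> b) *\<^sub>R b) \<le> (\<Sum>b\<in>T. norm ((v \<bullet> b) *\<^sub>R b))"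
    by (rule norm_sum)
  also have "\<dots> \<le> (\<Sum>b\<in>T. norm v)"
    using assms by (intro sum_mono) (auto simp: Basis_le_norm)
  finally show ?thesis by simp
qed

lemma coordinate_step_bound:
  fixes g :: "'a::euclidean_space \<Rightarrow> real"
  assumes dd: "\<And>\<tau>. \<bar>\<tau>\<bar> \<le> \<bar>s\<bar> \<Longrightarrow> (\<lambda>t. g ((p + \<tau> *\<^sub>R a) + t *\<^sub>R a)) differentiable (at 0)"
    and close: "\<And>\<tau>. \<bar>\<tau>\<bar> \<le> \<bar>s\<bar> \<Longrightarrow> \<bar>pdiff a g (p + \<tau> *\<^sub>R a) - c\<bar> \<le> e"
  shows "\<bar>g (p + s *\<^sub>R a) - g p - s * c\<bar> \<le> \<bar>s\<bar> * e"
proof -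
  have "((\<lambda>\<tau>. g (p + \<tau> *\<^sub>R a)) has_real_derivative pdiff a g (p + \<tau> *\<^sub>R a)) (at \<tau>)"
    if "\<bar>\<tau>\<bar> \<le> \<bar>s\<bar>" for \<tau>
    using pdiff_has_real_derivative_along_line[OF dd[OF that]] .
  from MVT_signed[OF this] obtain \<tau> where \<tau>: "\<bar>\<tau>\<bar> \<le> \<bar>s\<bar>"
    and mv: "g (p + s *\<^sub>R a) - g (p + 0 *\<^sub>R a) = s * pdiff a g (p + \<tau> *\<^sub>R a)"
    by blast
  have "\<bar>s * pdiff a g (p + \<tau> *\<^sub>R a) - s * c\<bar> = \<bar>s\<bar> * \<bar>pdiff a g (p + \<tau> *\<^sub>R a) - c\<bar>"
    by (simp add: abs_mult[symmetric] algebra_simps)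
  also have "\<dots> \<le> \<bar>s\<bar> * e" using close[OF \<tau>] by (rule mult_left_mono) simp
  finally show ?thesis using mv by simp
qed

text \<open>Move from \<open>x\<close> to \<open>x + v\<close> one coordinate at a time; along the way the partial
  derivatives stay within \<open>e\<close> of those at \<open>x\<close>.\<close>
lemma coordinatewise_increment_bound:
  fixes g :: "'a::euclidean_space \<Rightarrow> real"
  assumes "T \<subseteq> Basis"
    and dd: "\<And>z b. z \<in> S \<Longrightarrow> b \<in> Basis \<Longrightarrow> (\<lambda>t. g (z + t *\<^sub>R b)) differentiable (at 0)"
    and "\<And>z. dist z x \<le> real (card T) * norm v \<Longrightarrow>
           z \<in> S \<and> (\<forall>b\<in>Basis. \<bar>pdiff b g z - pdiff b g x\<bar> \<le> e)"
  shows "\<bar>g (x + (\<Sum>b\<in>T. (v \<bullet> b) *\<^sub>R b)) - g x - (\<Sum>b\<in>T. (v \<bullet> b) * pdiff b g x)\<bar>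
           \<le> real (card T) * e * norm v"
  using finite_subset[OF assms(1) finite_Basis] assms(1,3)
proof (induction T rule: finite_induct)
  case empty then show ?case by simp
next
  case (insert a T)
  have a: "a \<in> Basis" and TB: "T \<subseteq> Basis" using insert.prems by auto
  have near: "z \<in> S \<and> (\<forall>b\<in>Basis. \<bar>pdiff b g z - pdiff b g x\<bar> \<le> e)"
    if "dist z x \<le> (1 + real (card T)) * norm v" for z
    using insert.prems(2)[of z] that insert.hyps by simp
  have IH: "\<bar>g (x + (\<Sum>b\<in>T. (v \<bullet> b) *\<^sub>R b)) - g x - (\<Sum>b\<in>T. (v \<bullet> b) * pdiff b g x)\<bar>
              \<le> real (card T) * e * norm v"
  proof (rule insert.IH[OF TB])
    fix z assume "dist z x \<le> real (card T) * norm v"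
    moreover have "real (card T) * norm v \<le> (1 + real (card T)) * norm v"
      by (simp add: mult_right_mono)
    ultimately show "z \<in> S \<and> (\<forall>b\<in>Basis. \<bar>pdiff b g z - pdiff b g x\<bar> \<le> e)"
      by (intro near) linarith
  qed
  define p where "p = x + (\<Sum>b\<in>T. (v \<bullet> b) *\<^sub>R b)"
  define s where "s = v \<bullet> a"
  have sv: "\<bar>s\<bar> \<le> norm v" unfolding s_def using Basis_le_norm[OF a] by simp
  have line: "dist (p + \<tau> *\<^sub>R a) x \<le> (1 + real (card T)) * norm v" if "\<bar>\<tau>\<bar> \<le> \<bar>s\<bar>" for \<tau>
  proof -
    have "dist (p + \<tau> *\<^sub>R a) x \<le> norm (\<Sum>b\<in>T. (v \<bullet> b) *\<^sub>R b) + \<bar>\<tau>\<bar>"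
      using norm_triangle_ineq[of "\<Sum>b\<in>T. (v \<bullet> b) *\<^sub>R b" "\<tau> *\<^sub>R a"] a
      by (simp add: p_def dist_norm)
    then show ?thesis
      using norm_sum_Basis_subset_le[OF TB, of v] that sv by (simp add: distrib_right)
  qed
  have "\<bar>g (p + s *\<^sub>R a) - g p - s * pdiff a g x\<bar> \<le> \<bar>s\<bar> * e"
    using near[OF line] a by (intro coordinate_step_bound dd) auto
  also have "\<dots> \<le> norm v * e"
    using sv near[of x] a by (intro mult_right_mono) auto
  finally have "\<bar>g (p + s *\<^sub>R a) - g x - (s * pdiff a g x + (\<Sum>b\<in>T. (v \<bullet> b) * pdiff b g x))\<bar>
      \<le> real (card T) * e * norm v + norm v * e"
    using IH unfolding p_def by (simp add: abs_le_iff)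
  moreover have "x + (\<Sum>b\<in>insert a T. (v \<bullet> b) *\<^sub>R b) = p + s *\<^sub>R a"
    using insert.hyps by (simp add: p_def s_def)
  moreover have "(\<Sum>b\<in>insert a T. (v \<bullet> b) * pdiff b g x)
      = s * pdiff a g x + (\<Sum>b\<in>T. (v \<bullet> b) * pdiff b g x)"
    using insert.hyps by (simp add: s_def)
  ultimately have "\<bar>g (x + (\<Sum>b\<in>insert a T. (v \<bullet> b) *\<^sub>R b)) - g x
      - (\<Sum>b\<in>insert a T. (v \<bullet> b) * pdiff b g x)\<bar> \<le> (1 + real (card T)) * e * norm v"
    by (simp only:) (simp add: algebra_simps)
  then show ?case
    using insert.hyps by simp
qed

lemma has_derivative_if_continuous_partials:
  fixes g :: "'a::euclidean_space \<Rightarrow> real"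
  assumes S: "open S" and x: "x \<in> S"
    and dd: "\<And>z b. z \<in> S \<Longrightarrow> b \<in> Basis \<Longrightarrow> (\<lambda>t. g (z + t *\<^sub>R b)) differentiable (at 0)"
    and cont: "\<And>b. b \<in> Basis \<Longrightarrow> continuous_on S (pdiff b g)"
  shows "(g has_derivative (\<lambda>v. \<Sum>b\<in>Basis. (v \<bullet> b) * pdiff b g x)) (at x)"
  unfolding has_derivative_at_alt
proof (intro conjI allI impI)
  show "bounded_linear (\<lambda>v. \<Sum>b\<in>Basis. (v \<bullet> b) * pdiff b g x)"
    by (intro bounded_linear_sum bounded_linear_intros)
next
  fix e :: real assume e: "e > 0"
  define N where "N = real DIM('a)"
  have N: "N \<ge> 1" unfolding N_def using DIM_positive by (simp add: Suc_le_eq)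
  obtain d where d: "d > 0"
    and close: "\<And>z. dist z x < d \<Longrightarrow> z \<in> S \<and> (\<forall>b\<in>Basis. dist (pdiff b g z) (pdiff b g x) < e / N)"
  proof -
    have "e / N > 0" using e N by simp
    from finite_family_close_near[OF S x finite_Basis, of "\<lambda>b. pdiff b g", OF cont this] that
    show ?thesis by blast
  qed
  show "\<exists>\<delta>>0. \<forall>y. norm (y - x) < \<delta> \<longrightarrow>
          norm (g y - g x - (\<Sum>b\<in>Basis. ((y - x) \<bullet> b) * pdiff b g x)) \<le> e * norm (y - x)"
  proof (intro exI[of _ "d / N"] conjI allI impI)
    show "d / N > 0" using d N by simp
    fix y assume "norm (y - x) < d / N"
    then have small: "N * norm (y - x) < d" using N by (simp add: field_simps)
    have "\<bar>g (x + (\<Sum>b\<in>Basis. ((y - x) \<bullet> b) *\<^sub>R b)) - g x - (\<Sum>b\<in>Basis. ((y - x) \<bullet> b) * pdiff b g x)\<bar>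
          \<le> real (card (Basis :: 'a set)) * (e / N) * norm (y - x)"
    proof (rule coordinatewise_increment_bound[OF order_refl dd])
      fix z assume "dist z x \<le> real (card (Basis :: 'a set)) * norm (y - x)"
      then have "dist z x < d" using small by (simp add: N_def)
      then show "z \<in> S \<and> (\<forall>b\<in>Basis. \<bar>pdiff b g z - pdiff b g x\<bar> \<le> e / N)"
        using close by (fastforce simp: dist_real_def)
    qed
    then show "norm (g y - g x - (\<Sum>b\<in>Basis. ((y - x) \<bullet> b) * pdiff b g x)) \<le> e * norm (y - x)"
      using N by (simp add: euclidean_representation N_def)
  qed
qed

text \<open>The second difference \<open>g(x+su+sw) - g(x+su) - g(x+sw) + g(x)\<close> is symmetric in \<open>u\<close>
  and \<open>w\<close>; two mean value theorems write it as \<open>s\<^sup>2\<close> times a mixed partial at a nearby point.\<close>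
lemma second_difference_eq_mixed_partial:
  fixes g :: "'a::euclidean_space \<Rightarrow> real"
  assumes u: "u \<in> Basis" and w: "w \<in> Basis" and s: "s > 0"
    and inS: "\<And>z. dist z x \<le> 2 * s \<Longrightarrow> z \<in> S"
    and dd: "\<And>z b. z \<in> S \<Longrightarrow> b \<in> Basis \<Longrightarrow> (\<lambda>t. g (z + t *\<^sub>R b)) differentiable (at 0)"
    and dpg: "\<And>z b c. z \<in> S \<Longrightarrow> b \<in> Basis \<Longrightarrow> c \<in> Basis \<Longrightarrow>
                (\<lambda>t. pdiff b g (z + t *\<^sub>R c)) differentiable (at 0)"
  shows "\<exists>\<xi>. dist \<xi> x \<le> 2 * s \<and>
     g (x + s *\<^sub>R u + s *\<^sub>R w) - g (x + s *\<^sub>R u) - g (x + s *\<^sub>R w) + g x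
       = s\<^sup>2 * pdiff w (pdiff u g) \<xi>"
proof -
  have near: "dist (x + a *\<^sub>R u + b *\<^sub>R w) x \<le> 2 * s" if "\<bar>a\<bar> \<le> s" "\<bar>b\<bar> \<le> s" for a b
  proof -
    have "dist (x + a *\<^sub>R u + b *\<^sub>R w) x \<le> \<bar>a\<bar> + \<bar>b\<bar>"
      using norm_triangle_ineq[of "a *\<^sub>R u" "b *\<^sub>R w"] u w by (simp add: dist_norm)
    then show ?thesis using that by linarith
  qed
  have inS': "x + a *\<^sub>R u + b *\<^sub>R w \<in> S" if "\<bar>a\<bar> \<le> s" "\<bar>b\<bar> \<le> s" for a b
    using inS[OF near[OF that]] .
  define \<phi> where "\<phi> \<tau> = g ((x + s *\<^sub>R w) + \<tau> *\<^sub>R u) - g (x + \<tau> *\<^sub>R u)" for \<tau>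
  have der\<phi>: "(\<phi> has_real_derivative
      (pdiff u g ((x + s *\<^sub>R w) + \<tau> *\<^sub>R u) - pdiff u g (x + \<tau> *\<^sub>R u))) (at \<tau>)"
    if "\<bar>\<tau>\<bar> \<le> \<bar>s\<bar>" for \<tau>
    unfolding \<phi>_def
  proof (intro DERIV_diff pdiff_has_real_derivative_along_line dd u)
    show "x + s *\<^sub>R w + \<tau> *\<^sub>R u \<in> S" using inS'[of \<tau> s] that s by (simp add: algebra_simps)
    show "x + \<tau> *\<^sub>R u \<in> S" using inS'[of \<tau> 0] that s by simp
  qed
  obtain \<tau> where \<tau>: "\<bar>\<tau>\<bar> \<le> \<bar>s\<bar>"
    and mv1: "\<phi> s - \<phi> 0 = s * (pdiff u g ((x + s *\<^sub>R w) + \<tau> *\<^sub>R u) - pdiff u g (x + \<tau> *\<^sub>R u))"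
    using MVT_signed[OF der\<phi>] by blast
  define \<psi> where "\<psi> \<sigma> = pdiff u g ((x + \<tau> *\<^sub>R u) + \<sigma> *\<^sub>R w)" for \<sigma>
  have der\<psi>: "(\<psi> has_real_derivative pdiff w (pdiff u g) ((x + \<tau> *\<^sub>R u) + \<sigma> *\<^sub>R w)) (at \<sigma>)"
    if "\<bar>\<sigma>\<bar> \<le> \<bar>s\<bar>" for \<sigma>
    unfolding \<psi>_def
    by (intro pdiff_has_real_derivative_along_line dpg u w) (use inS'[of \<tau> \<sigma>] that \<tau> s in simp)
  obtain \<sigma> where \<sigma>: "\<bar>\<sigma>\<bar> \<le> \<bar>s\<bar>"
    and mv2: "\<psi> s - \<psi> 0 = s * pdiff w (pdiff u g) ((x + \<tau> *\<^sub>R u) + \<sigma> *\<^sub>R w)"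
    using MVT_signed[OF der\<psi>] by blast
  have "g (x + s *\<^sub>R u + s *\<^sub>R w) - g (x + s *\<^sub>R u) - g (x + s *\<^sub>R w) + g x = \<phi> s - \<phi> 0"
    unfolding \<phi>_def by (simp add: algebra_simps)
  also have "\<dots> = s * (\<psi> s - \<psi> 0)"
    unfolding mv1 by (simp add: \<psi>_def algebra_simps)
  also have "\<dots> = s\<^sup>2 * pdiff w (pdiff u g) (x + \<tau> *\<^sub>R u + \<sigma> *\<^sub>R w)"
    unfolding mv2 by (simp add: power2_eq_square)
  finally show ?thesis
    using near[of \<tau> \<sigma>] \<tau> \<sigma> s by (intro exI[of _ "x + \<tau> *\<^sub>R u + \<sigma> *\<^sub>R w"]) simp
qed

lemma mixed_partials_commute:
  fixes g :: "'a::euclidean_space \<Rightarrow> real"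
  assumes S: "open S" and x: "x \<in> S" and u: "u \<in> Basis" and w: "w \<in> Basis"
    and dd: "\<And>z b. z \<in> S \<Longrightarrow> b \<in> Basis \<Longrightarrow> (\<lambda>t. g (z + t *\<^sub>R b)) differentiable (at 0)"
    and dpg: "\<And>z b c. z \<in> S \<Longrightarrow> b \<in> Basis \<Longrightarrow> c \<in> Basis \<Longrightarrow>
                (\<lambda>t. pdiff b g (z + t *\<^sub>R c)) differentiable (at 0)"
    and cont: "\<And>b c. b \<in> Basis \<Longrightarrow> c \<in> Basis \<Longrightarrow> continuous_on S (pdiff c (pdiff b g))"
  shows "pdiff w (pdiff u g) x = pdiff u (pdiff w g) x"
proof (rule ccontr)
  assume ne: "pdiff w (pdiff u g) x \<noteq> pdiff u (pdiff w g) x"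
  define e where "e = \<bar>pdiff w (pdiff u g) x - pdiff u (pdiff w g) x\<bar> / 2"
  have e: "e > 0" using ne by (simp add: e_def)
  define f where "f i = (if i then pdiff w (pdiff u g) else pdiff u (pdiff w g))" for i
  have "continuous_on S (f i)" for i unfolding f_def using cont u w by auto
  then obtain d where d: "d > 0"
    and close: "\<And>z. dist z x < d \<Longrightarrow> z \<in> S \<and> (\<forall>i\<in>UNIV. dist (f i z) (f i x) < e)"
    using finite_family_close_near[OF S x, of "UNIV :: bool set" f, OF _ _ e] by auto
  define s where "s = d / 3"
  have s: "s > 0" and inS: "\<And>z. dist z x \<le> 2 * s \<Longrightarrow> z \<in> S"
    using close d by (auto simp: s_def)
  obtain \<xi>1 where \<xi>1: "dist \<xi>1 x \<le> 2 * s" and E1: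
    "g (x + s *\<^sub>R u + s *\<^sub>R w) - g (x + s *\<^sub>R u) - g (x + s *\<^sub>R w) + g x
       = s\<^sup>2 * pdiff w (pdiff u g) \<xi>1"
    using second_difference_eq_mixed_partial[OF u w s inS dd dpg] by blast
  obtain \<xi>2 where \<xi>2: "dist \<xi>2 x \<le> 2 * s" and E2:
    "g (x + s *\<^sub>R w + s *\<^sub>R u) - g (x + s *\<^sub>R w) - g (x + s *\<^sub>R u) + g x
       = s\<^sup>2 * pdiff u (pdiff w g) \<xi>2"
    using second_difference_eq_mixed_partial[OF w u s inS dd dpg] by blast
  have "s\<^sup>2 * pdiff w (pdiff u g) \<xi>1 = s\<^sup>2 * pdiff u (pdiff w g) \<xi>2"
    using E1 E2 by (simp add: algebra_simps)
  then have eq: "pdiff w (pdiff u g) \<xi>1 = pdiff u (pdiff w g) \<xi>2" using s by simp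
  have "dist \<xi>1 x < d" "dist \<xi>2 x < d" using \<xi>1 \<xi>2 d by (auto simp: s_def)
  then have "\<bar>pdiff w (pdiff u g) \<xi>1 - pdiff w (pdiff u g) x\<bar> < e"
     "\<bar>pdiff u (pdiff w g) \<xi>2 - pdiff u (pdiff w g) x\<bar> < e"
    using close[of \<xi>1] close[of \<xi>2] unfolding dist_real_def
    by (metis (full_types) UNIV_I f_def)+
  then show False using eq by (simp add: e_def abs_if split: if_splits)
qed

lemma lipschitz_on_cball_if_continuous_partials:
  fixes g :: "'a::euclidean_space \<Rightarrow> real"
  assumes dd: "\<And>z b. b \<in> Basis \<Longrightarrow> (\<lambda>t. g (z + t *\<^sub>R b)) differentiable (at 0)"
    and cont: "\<And>b. b \<in> Basis \<Longrightarrow> continuous_on UNIV (pdiff b g)"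
  shows "\<exists>L. \<forall>y\<in>cball 0 R. \<forall>z\<in>cball 0 R. \<bar>g y - g z\<bar> \<le> L * norm (y - z)"
proof -
  have der: "(g has_derivative (\<lambda>v. \<Sum>b\<in>Basis. (v \<bullet> b) * pdiff b g x)) (at x)" for x
    by (rule has_derivative_if_continuous_partials[OF open_UNIV UNIV_I]) (auto intro: dd cont)
  have "continuous_on (cball 0 R) (\<lambda>y. \<Sum>b\<in>Basis. \<bar>pdiff b g y\<bar>)"
    using cont by (intro continuous_intros continuous_on_subset[OF cont]) auto
  then have "bounded ((\<lambda>y. \<Sum>b\<in>Basis. \<bar>pdiff b g y\<bar>) ` cball 0 R)"
    by (intro compact_imp_bounded compact_continuous_image compact_cball)
  then obtain M where "\<forall>u\<in>(\<lambda>y. \<Sum>b\<in>Basis. \<bar>pdiff b g y\<bar>) ` cball 0 R. norm u \<le> M"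
    unfolding bounded_iff by blast
  then have M: "(\<Sum>b\<in>Basis. \<bar>pdiff b g y\<bar>) \<le> M" if "y \<in> cball 0 R" for y
    using that by fastforce
  have onorm_M: "onorm (\<lambda>v. \<Sum>b\<in>Basis. (v \<bullet> b) * pdiff b g x) \<le> M" if "x \<in> cball 0 R" for x
  proof (rule order_trans[OF onorm_le M[OF that]])
    fix v :: 'a
    have "norm (\<Sum>b\<in>Basis. (v \<bullet> b) * pdiff b g x) \<le> (\<Sum>b\<in>Basis. \<bar>(v \<bullet> b) * pdiff b g x\<bar>)"
      by (metis real_norm_def sum_abs)
    also have "\<dots> \<le> (\<Sum>b\<in>Basis. norm v * \<bar>pdiff b g x\<bar>)"
      by (intro sum_mono) (simp add: abs_mult Basis_le_norm mult_right_mono)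
    finally show "norm (\<Sum>b\<in>Basis. (v \<bullet> b) * pdiff b g x) \<le> (\<Sum>b\<in>Basis. \<bar>pdiff b g x\<bar>) * norm v"
      by (simp add: sum_distrib_left mult.commute)
  qed
  have "norm (g y - g z) \<le> M * norm (y - z)" if "y \<in> cball 0 R" "z \<in> cball 0 R" for y z
  proof (rule differentiable_bound[OF convex_cball _ _ that])
    show "onorm (\<lambda>v. \<Sum>b\<in>Basis. (v \<bullet> b) * pdiff b g x) \<le> M" if "x \<in> cball 0 R" for x
      using onorm_M[OF that] .
    show "(g has_derivative (\<lambda>v. \<Sum>b\<in>Basis. (v \<bullet> b) * pdiff b g x)) (at x within cball 0 R)" for x
      using der has_derivative_at_withinI by blast
  qed
  then show ?thesis by (metis real_norm_def)
qed

section \<open>Gradient and Hessian of a \<open>C\<^sup>k\<close> function\<close>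

lemma Ck_on_continuous_on:
  "Ck_on k S g \<Longrightarrow> set vs \<subseteq> Basis \<Longrightarrow> length vs \<le> k \<Longrightarrow> continuous_on S (ipd vs g)"
  unfolding Ck_on_def by blast

lemma Ck_on_differentiable:
  "Ck_on k S g \<Longrightarrow> set vs \<subseteq> Basis \<Longrightarrow> length vs < k \<Longrightarrow> b \<in> Basis \<Longrightarrow> x \<in> S \<Longrightarrow>
     (\<lambda>t. ipd vs g (x + t *\<^sub>R b)) differentiable (at 0)"
  unfolding Ck_on_def by blast

lemma pdiff_has_derivative_if_Ck2:
  assumes "Ck_on 2 S g" "open S" "x \<in> S" "b \<in> Basis"
  shows "(pdiff b g has_derivative (\<lambda>v. \<Sum>c\<in>Basis. (v \<bullet> c) * pdiff c (pdiff b g) x)) (at x)"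
proof (rule has_derivative_if_continuous_partials[OF assms(2,3)])
  show "(\<lambda>t. pdiff b g (z + t *\<^sub>R c)) differentiable at 0" if "z \<in> S" "c \<in> Basis" for z c
    using Ck_on_differentiable[OF assms(1), of "[b]" c z] assms(4) that by simp
  show "continuous_on S (pdiff c (pdiff b g))" if "c \<in> Basis" for c
    using Ck_on_continuous_on[OF assms(1), of "[c,b]"] assms(4) that by simp
qed

lemma grad_has_derivative_hess:
  assumes "Ck_on 2 S g" "open S" "x \<in> S"
  shows "(grad g has_derivative hess g x) (at x)"
proof -
  have "((\<lambda>y. \<Sum>b\<in>Basis. pdiff b g y *\<^sub>R b) has_derivative
         (\<lambda>v. \<Sum>b\<in>Basis. (\<Sum>c\<in>Basis. (v \<bullet> c) * pdiff c (pdiff b g) x) *\<^sub>R b)) (at x)"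
    by (intro has_derivative_sum has_derivative_scaleR_left pdiff_has_derivative_if_Ck2[OF assms])
  then show ?thesis unfolding grad_def[abs_def] hess_def[abs_def] by simp
qed

lemma pdiff_pdiff_commute_if_Ck2:
  assumes "Ck_on 2 S g" "open S" "x \<in> S" "b \<in> Basis" "c \<in> Basis"
  shows "pdiff c (pdiff b g) x = pdiff b (pdiff c g) x"
proof (rule mixed_partials_commute[OF assms(2,3,4,5)])
  show "(\<lambda>t. g (z + t *\<^sub>R b)) differentiable at 0" if "z \<in> S" "b \<in> Basis" for z b
    using Ck_on_differentiable[OF assms(1), of "[]" b z] that by simp
  show "(\<lambda>t. pdiff b g (z + t *\<^sub>R c)) differentiable at 0"
    if "z \<in> S" "b \<in> Basis" "c \<in> Basis" for z b c
    using Ck_on_differentiable[OF assms(1), of "[b]" c z] that by simp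
  show "continuous_on S (pdiff c (pdiff b g))" if "b \<in> Basis" "c \<in> Basis" for b c
    using Ck_on_continuous_on[OF assms(1), of "[c,b]"] that by simp
qed

lemma hess_inner:
  "hess g x v \<bullet> w = (\<Sum>b\<in>Basis. \<Sum>c\<in>Basis. (v \<bullet> c) * (w \<bullet> b) * pdiff c (pdiff b g) x)"
  unfolding hess_def inner_sum_left inner_scaleR_left sum_distrib_right
  by (simp add: inner_commute ac_simps)

lemma hess_self_adjoint:
  assumes "Ck_on 2 S g" "open S" "x \<in> S"
  shows "hess g x v \<bullet> w = v \<bullet> hess g x w"
proof -
  have "hess g x v \<bullet> w = (\<Sum>b\<in>Basis. \<Sum>c\<in>Basis. (v \<bullet> c) * (w \<bullet> b) * pdiff b (pdiff c g) x)"
    unfolding hess_inner using pdiff_pdiff_commute_if_Ck2[OF assms] by (intro sum.cong refl) simp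
  also have "\<dots> = (\<Sum>c\<in>Basis. \<Sum>b\<in>Basis. (w \<bullet> b) * (v \<bullet> c) * pdiff b (pdiff c g) x)"
    by (subst sum.swap) (simp add: mult.commute)
  also have "\<dots> = hess g x w \<bullet> v" by (rule hess_inner[symmetric])
  finally show ?thesis by (simp add: inner_commute)
qed

lemma norm_hess_diff_le:
  fixes g :: "'a::euclidean_space \<Rightarrow> real"
  assumes "\<And>b c. b \<in> Basis \<Longrightarrow> c \<in> Basis \<Longrightarrow> \<bar>pdiff c (pdiff b g) y - pdiff c (pdiff b g) z\<bar> \<le> K"
  shows "norm (hess g y v - hess g z v) \<le> real DIM('a) * real DIM('a) * K * norm v"
proof -
  define \<Delta> where "\<Delta> b c = pdiff c (pdiff b g) y - pdiff c (pdiff b g) z" for b c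
  have "hess g y v - hess g z v = (\<Sum>b\<in>Basis. (\<Sum>c\<in>Basis. (v \<bullet> c) * \<Delta> b c) *\<^sub>R b)"
    unfolding hess_def \<Delta>_def
    by (simp add: sum_subtractf[symmetric] scaleR_diff_left[symmetric] right_diff_distrib)
  also have "norm \<dots> \<le> (\<Sum>b\<in>Basis. norm ((\<Sum>c\<in>Basis. (v \<bullet> c) * \<Delta> b c) *\<^sub>R b))"
    by (rule norm_sum)
  also have "\<dots> \<le> (\<Sum>b\<in>(Basis :: 'a set). real DIM('a) * (K * norm v))"
  proof (rule sum_mono)
    fix b :: 'a assume b: "b \<in> Basis"
    have "norm ((\<Sum>c\<in>Basis. (v \<bullet> c) * \<Delta> b c) *\<^sub>R b) \<le> (\<Sum>c\<in>Basis. \<bar>(v \<bullet> c) * \<Delta> b c\<bar>)"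
      using b by (simp add: sum_abs)
    also have "\<dots> \<le> (\<Sum>c\<in>(Basis :: 'a set). K * norm v)"
    proof (rule sum_mono)
      fix c :: 'a assume c: "c \<in> Basis"
      have "\<bar>v \<bullet> c\<bar> * \<bar>\<Delta> b c\<bar> \<le> norm v * K"
        using Basis_le_norm[OF c, of v] assms[OF b c] by (intro mult_mono) (auto simp: \<Delta>_def)
      then show "\<bar>(v \<bullet> c) * \<Delta> b c\<bar> \<le> K * norm v" by (simp add: abs_mult mult.commute)
    qed
    finally show "norm ((\<Sum>c\<in>Basis. (v \<bullet> c) * \<Delta> b c) *\<^sub>R b) \<le> real DIM('a) * (K * norm v)"
      by simp
  qed
  finally show ?thesis by (simp add: mult.assoc)
qed

lemma hess_locally_lipschitz:
  fixes g :: "'a::euclidean_space \<Rightarrow> real"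
  assumes "Ck_on 3 UNIV g"
  shows "\<exists>L\<ge>0. \<forall>y\<in>cball 0 R. \<forall>z\<in>cball 0 R. \<forall>v.
           norm (hess g y v - hess g z v) \<le> L * norm (y - z) * norm v"
proof -
  have "\<forall>i\<in>Basis \<times> Basis. \<exists>L. \<forall>y\<in>cball 0 R. \<forall>z\<in>cball 0 R.
          \<bar>pdiff (snd i) (pdiff (fst i) g) y - pdiff (snd i) (pdiff (fst i) g) z\<bar> \<le> L * norm (y - z)"
  proof
    fix i :: "'a \<times> 'a" assume i: "i \<in> Basis \<times> Basis"
    show "\<exists>L. \<forall>y\<in>cball 0 R. \<forall>z\<in>cball 0 R.
          \<bar>pdiff (snd i) (pdiff (fst i) g) y - pdiff (snd i) (pdiff (fst i) g) z\<bar> \<le> L * norm (y - z)"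
    proof (rule lipschitz_on_cball_if_continuous_partials)
      show "(\<lambda>t. pdiff (snd i) (pdiff (fst i) g) (z + t *\<^sub>R d)) differentiable at 0"
        if "d \<in> Basis" for z d
        using Ck_on_differentiable[OF assms, of "[snd i, fst i]" d z] i that by auto
      show "continuous_on UNIV (pdiff d (pdiff (snd i) (pdiff (fst i) g)))" if "d \<in> Basis" for d
        using Ck_on_continuous_on[OF assms, of "[d, snd i, fst i]"] i that by auto
    qed
  qed
  then obtain Lf where Lf: "\<And>i y z. i \<in> Basis \<times> Basis \<Longrightarrow> y \<in> cball 0 R \<Longrightarrow> z \<in> cball 0 R \<Longrightarrow>
      \<bar>pdiff (snd i) (pdiff (fst i) g) y - pdiff (snd i) (pdiff (fst i) g) z\<bar> \<le> Lf i * norm (y - z)"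
    by metis
  define L where "L = (\<Sum>i\<in>Basis \<times> Basis. \<bar>Lf i\<bar>)"
  have "\<bar>pdiff c (pdiff b g) y - pdiff c (pdiff b g) z\<bar> \<le> L * norm (y - z)"
    if "b \<in> Basis" "c \<in> Basis" "y \<in> cball 0 R" "z \<in> cball 0 R" for b c y z
  proof -
    have "\<bar>Lf (b, c)\<bar> \<le> L"
      unfolding L_def by (rule member_le_sum) (use that in auto)
    then have "Lf (b, c) \<le> L" by linarith
    then have "Lf (b, c) * norm (y - z) \<le> L * norm (y - z)"
      by (simp add: mult_right_mono)
    with Lf[of "(b, c)" y z] that show ?thesis by simp
  qed
  then have "norm (hess g y v - hess g z v) \<le> (real DIM('a) * real DIM('a) * L) * norm (y - z) * norm v"
    if "y \<in> cball 0 R" "z \<in> cball 0 R" for y z v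
    using norm_hess_diff_le[of g y z "L * norm (y - z)" v] that by (simp add: ac_simps)
  moreover have "real DIM('a) * real DIM('a) * L \<ge> 0" by (simp add: L_def sum_nonneg)
  ultimately show ?thesis by blast
qed

section \<open>Existence and uniqueness of solutions of ODEs\<close>

lemma inner_perturbed_le:
  fixes e u r :: "'a::real_inner"
  assumes "norm u \<le> B * norm e"
  shows "2 * (e \<bullet> (u + r)) \<le> (2 * B + 1) * (norm e)\<^sup>2 + (norm r)\<^sup>2"
proof -
  have "e \<bullet> (u + r) \<le> norm e * norm (u + r)" by (rule norm_cauchy_schwarz)
  also have "\<dots> \<le> norm e * (B * norm e + norm r)"
    using assms norm_triangle_ineq[of u r] by (intro mult_left_mono) auto
  finally have "e \<bullet> (u + r) \<le> B * (norm e)\<^sup>2 + norm e * norm r"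
    by (simp add: power2_eq_square algebra_simps)
  moreover have "2 * (norm e * norm r) \<le> (norm e)\<^sup>2 + (norm r)\<^sup>2"
    using sum_squares_bound[of "norm e" "norm r"] by (simp add: power2_eq_square algebra_simps)
  ultimately show ?thesis by (simp add: algebra_simps)
qed

lemma gronwall:
  fixes u u' :: "real \<Rightarrow> real"
  assumes T: "T \<ge> 0" and cu: "continuous_on {0..T} u"
    and du: "\<And>t. 0 < t \<Longrightarrow> t < T \<Longrightarrow> (u has_real_derivative u' t) (at t)"
    and le: "\<And>t. 0 < t \<Longrightarrow> t < T \<Longrightarrow> u' t \<le> a * u t + b"
    and a: "a \<ge> 0" and b: "b \<ge> 0"
  shows "u T \<le> exp (a * T) * (u 0 + b * T)"
proof -
  define g where "g t = exp (- a * t) * u t - b * t" for t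
  have "g T \<le> g 0"
  proof (rule DERIV_nonpos_imp_decreasing_open[OF T])
    fix t assume t: "0 < t" "t < T"
    have der: "(g has_real_derivative (exp (- a * t) * (u' t - a * u t) - b)) (at t)"
      unfolding g_def[abs_def] by (auto intro!: derivative_eq_intros du t simp: algebra_simps)
    have "exp (- a * t) * (u' t - a * u t) \<le> exp (- a * t) * b"
      using le[OF t] by (intro mult_left_mono) auto
    also have "\<dots> \<le> b"
      using a b t by (intro mult_left_le_one_le) auto
    finally show "\<exists>y. (g has_real_derivative y) (at t) \<and> y \<le> 0"
      using der by (intro exI[of _ "exp (- a * t) * (u' t - a * u t) - b"]) auto
  next
    show "continuous_on {0..T} g" unfolding g_def by (intro continuous_intros cu)
  qed
  then have "exp (- a * T) * u T \<le> u 0 + b * T" by (simp add: g_def)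
  then have "exp (a * T) * (exp (- a * T) * u T) \<le> exp (a * T) * (u 0 + b * T)"
    by (intro mult_left_mono) auto
  then show ?thesis by (simp add: exp_minus_inverse mult.assoc[symmetric] exp_add[symmetric])
qed

lemma has_vector_derivative_at_interior:
  assumes "(x has_vector_derivative d) (at t within {0..h})" "0 < t" "t < h"
  shows "(x has_vector_derivative d) (at t)"
  using assms at_within_interior[of t "{0..h}"] by simp

lemma has_real_derivative_norm_squared:
  fixes f :: "real \<Rightarrow> 'a::real_inner"
  assumes "(f has_vector_derivative f') (at t)"
  shows "((\<lambda>t. (norm (f t))\<^sup>2) has_real_derivative 2 * (f t \<bullet> f')) (at t)"
proof -
  have "((\<lambda>t. f t \<bullet> f t) has_derivative (\<lambda>s. f t \<bullet> (s *\<^sub>R f') + (s *\<^sub>R f') \<bullet> f t)) (at t)"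
    using assms unfolding has_vector_derivative_def by (intro derivative_intros) auto
  then have "((\<lambda>t. f t \<bullet> f t) has_derivative (*) (2 * (f t \<bullet> f'))) (at t)"
    by (rule has_derivative_eq_rhs) (auto simp: inner_commute algebra_simps fun_eq_iff)
  then show ?thesis by (simp add: has_field_derivative_def power2_norm_eq_inner)
qed

lemma continuous_on_if_has_vector_derivative:
  assumes "\<forall>t\<in>{0..h}. (x has_vector_derivative d t) (at t within {0..h})"
  shows "continuous_on {0..h} x"
  using assms continuous_on_eq_continuous_within has_vector_derivative_continuous by blast

text \<open>Gronwall applied to \<open>\<parallel>x\<^sub>1 - x\<^sub>2\<parallel>\<^sup>2\<close>, which starts at \<open>0\<close>.\<close>
lemma ode_solution_unique:
  fixes G :: "real \<Rightarrow> 'a::euclidean_space \<Rightarrow> 'a"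
  assumes lip: "\<And>R. \<exists>L. \<forall>t\<in>{0..h}. \<forall>x\<in>cball 0 R. \<forall>y\<in>cball 0 R.
                   norm (G t x - G t y) \<le> L * norm (x - y)"
    and d1: "\<forall>t\<in>{0..h}. (x1 has_vector_derivative G t (x1 t)) (at t within {0..h})"
    and d2: "\<forall>t\<in>{0..h}. (x2 has_vector_derivative G t (x2 t)) (at t within {0..h})"
    and i: "x1 0 = x2 0" and t: "t \<in> {0..h}"
  shows "x1 t = x2 t"
proof -
  have c1: "continuous_on {0..h} x1" and c2: "continuous_on {0..h} x2"
    using continuous_on_if_has_vector_derivative[OF d1] continuous_on_if_has_vector_derivative[OF d2]
    by auto
  obtain R1 where R1: "\<forall>t\<in>{0..h}. norm (x1 t) \<le> R1"
    using compact_imp_bounded[OF compact_continuous_image[OF c1 compact_Icc]]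
    unfolding bounded_iff by blast
  obtain R2 where R2: "\<forall>t\<in>{0..h}. norm (x2 t) \<le> R2"
    using compact_imp_bounded[OF compact_continuous_image[OF c2 compact_Icc]]
    unfolding bounded_iff by blast
  define R where "R = max R1 R2"
  have R: "x1 s \<in> cball 0 R \<and> x2 s \<in> cball 0 R" if "s \<in> {0..h}" for s
    using R1 R2 that by (fastforce simp: R_def le_max_iff_disj)
  obtain L where L: "\<forall>t\<in>{0..h}. \<forall>x\<in>cball 0 R. \<forall>y\<in>cball 0 R. norm (G t x - G t y) \<le> L * norm (x - y)"
    using lip by blast
  define u where "u s = (norm (x1 s - x2 s))\<^sup>2" for s
  have "u t \<le> exp (2 * \<bar>L\<bar> * t) * (u 0 + 0 * t)"
  proof (rule gronwall)
    show "continuous_on {0..t} u" unfolding u_def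
      using t by (intro continuous_intros continuous_on_subset[OF c1] continuous_on_subset[OF c2]) auto
    fix s assume s: "0 < s" "s < t"
    then have sh: "0 < s" "s < h" using t by auto
    have "((\<lambda>s. x1 s - x2 s) has_vector_derivative G s (x1 s) - G s (x2 s)) (at s)"
      using has_vector_derivative_at_interior[OF d1[rule_format] sh]
        has_vector_derivative_at_interior[OF d2[rule_format] sh] sh
      by (intro has_vector_derivative_diff) auto
    from has_real_derivative_norm_squared[OF this]
    show "(u has_real_derivative 2 * ((x1 s - x2 s) \<bullet> (G s (x1 s) - G s (x2 s)))) (at s)"
      unfolding u_def .
    have "norm (G s (x1 s) - G s (x2 s)) \<le> L * norm (x1 s - x2 s)"
      using L R[of s] sh by auto
    also have "\<dots> \<le> \<bar>L\<bar> * norm (x1 s - x2 s)" by (intro mult_right_mono) auto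
    finally have "norm (G s (x1 s) - G s (x2 s)) \<le> \<bar>L\<bar> * norm (x1 s - x2 s)" .
    then have "(x1 s - x2 s) \<bullet> (G s (x1 s) - G s (x2 s)) \<le> norm (x1 s - x2 s) * (\<bar>L\<bar> * norm (x1 s - x2 s))"
      by (intro order_trans[OF norm_cauchy_schwarz] mult_left_mono) auto
    then show "2 * ((x1 s - x2 s) \<bullet> (G s (x1 s) - G s (x2 s))) \<le> 2 * \<bar>L\<bar> * u s + 0"
      by (simp add: u_def power2_eq_square algebra_simps)
  qed (use t in auto)
  then show ?thesis using i by (simp add: u_def)
qed

lemma has_vector_derivative_integral_from_0:
  fixes g :: "real \<Rightarrow> 'a::euclidean_space"
  assumes "continuous_on {0..h} g" "t \<in> {0..h}"
  shows "((\<lambda>t. y0 + integral {0..t} g) has_vector_derivative g t) (at t within {0..h})"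
  using integral_has_vector_derivative[OF assms] by (auto intro!: derivative_eq_intros)

definition picard :: "(real \<Rightarrow> 'a::euclidean_space \<Rightarrow> 'a) \<Rightarrow> 'a \<Rightarrow> nat \<Rightarrow> real \<Rightarrow> 'a" where
  "picard G y0 k = ((\<lambda>p t. y0 + integral {0..t} (\<lambda>s. G s (p s))) ^^ k) (\<lambda>t. y0)"

lemma picard_0[simp]: "picard G y0 0 = (\<lambda>t. y0)"
  by (simp add: picard_def)

lemma picard_Suc: "picard G y0 (Suc k) t = y0 + integral {0..t} (\<lambda>s. G s (picard G y0 k s))"
  by (simp add: picard_def)

context
  fixes G :: "real \<Rightarrow> 'a::euclidean_space \<Rightarrow> 'a" and y0 :: 'a and h R B L :: real
  assumes h: "h > 0" and R0: "R \<ge> 0" and L0: "L \<ge> 0"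
    and cG: "\<And>p. continuous_on {0..h} p \<Longrightarrow> (\<forall>s\<in>{0..h}. p s \<in> cball y0 R) \<Longrightarrow>
               continuous_on {0..h} (\<lambda>s. G s (p s))"
    and bG: "\<And>t x. t \<in> {0..h} \<Longrightarrow> x \<in> cball y0 R \<Longrightarrow> norm (G t x) \<le> B"
    and lG: "\<And>t x y. t \<in> {0..h} \<Longrightarrow> x \<in> cball y0 R \<Longrightarrow> y \<in> cball y0 R \<Longrightarrow>
               norm (G t x - G t y) \<le> L * norm (x - y)"
    and hB: "h * B \<le> R" and hL: "h * L \<le> 1/2"
begin

lemma picard_bound_nonneg: "B \<ge> 0"
proof -
  have "norm (G 0 y0) \<le> B" using bG h R0 by simp
  then show ?thesis by (rule order_trans[OF norm_ge_zero])
qed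

lemma picard_continuous_in_cball:
  "continuous_on {0..h} (picard G y0 k) \<and> (\<forall>t\<in>{0..h}. picard G y0 k t \<in> cball y0 R)"
proof (induction k)
  case 0
  then show ?case using R0 by simp
next
  case (Suc k)
  have cg: "continuous_on {0..h} (\<lambda>s. G s (picard G y0 k s))" using cG Suc by blast
  have "continuous_on {0..h} (\<lambda>t. y0 + integral {0..t} (\<lambda>s. G s (picard G y0 k s)))"
    using has_vector_derivative_integral_from_0[OF cg]
      continuous_on_eq_continuous_within has_vector_derivative_continuous by blast
  moreover have "picard G y0 (Suc k) t \<in> cball y0 R" if t: "t \<in> {0..h}" for t
  proof -
    have "norm (integral {0..t} (\<lambda>s. G s (picard G y0 k s))) \<le> B * (t - 0)"
      using t Suc by (intro integral_bound continuous_on_subset[OF cg] bG) auto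
    also have "\<dots> \<le> B * h" using t picard_bound_nonneg by (intro mult_left_mono) auto
    finally show ?thesis using hB by (simp add: picard_Suc dist_norm mult.commute)
  qed
  ultimately show ?case by (simp add: picard_Suc[abs_def])
qed

lemma continuous_on_G_picard: "continuous_on {0..h} (\<lambda>s. G s (picard G y0 k s))"
  using cG picard_continuous_in_cball by blast

text \<open>The Picard map is a contraction with constant \<open>h L \<le> 1/2\<close>.\<close>
lemma picard_step_bound:
  assumes "t \<in> {0..h}"
  shows "norm (picard G y0 (Suc k) t - picard G y0 k t) \<le> R * (1/2)^k"
  using assms
proof (induction k arbitrary: t)
  case 0
  have "norm (integral {0..t} (\<lambda>s. G s y0)) \<le> B * (t - 0)"
    using 0 continuous_on_G_picard[of 0] R0 by (intro integral_bound bG) (auto intro: continuous_on_subset)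
  also have "\<dots> \<le> B * h" using 0 picard_bound_nonneg by (intro mult_left_mono) auto
  finally show ?case using hB by (simp add: picard_Suc mult.commute)
next
  case (Suc k)
  let ?P = "picard G y0"
  have int: "(\<lambda>s. G s (?P m s)) integrable_on {0..t}" for m
    using Suc.prems continuous_on_G_picard[of m]
    by (intro integrable_continuous_interval) (auto intro: continuous_on_subset)
  have "?P (Suc (Suc k)) t - ?P (Suc k) t
      = integral {0..t} (\<lambda>s. G s (?P (Suc k) s)) - integral {0..t} (\<lambda>s. G s (?P k s))"
    unfolding picard_Suc[of G y0 "Suc k" t] picard_Suc[of G y0 k t] by simp
  also have "\<dots> = integral {0..t} (\<lambda>s. G s (?P (Suc k) s) - G s (?P k s))"
    by (rule integral_diff[OF int int, symmetric])
  also have "norm \<dots> \<le> (L * (R * (1/2)^k)) * (t - 0)"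
  proof (rule integral_bound)
    show "continuous_on {0..t} (\<lambda>s. G s (?P (Suc k) s) - G s (?P k s))"
      using Suc.prems
      by (intro continuous_intros continuous_on_subset[OF continuous_on_G_picard]) auto
    fix s assume "s \<in> {0..t}"
    then have sh: "s \<in> {0..h}" using Suc.prems by auto
    have "norm (G s (?P (Suc k) s) - G s (?P k s)) \<le> L * norm (?P (Suc k) s - ?P k s)"
      using picard_continuous_in_cball sh by (intro lG) auto
    also have "\<dots> \<le> L * (R * (1/2)^k)" using Suc.IH[OF sh] L0 by (intro mult_left_mono)
    finally show "norm (G s (?P (Suc k) s) - G s (?P k s)) \<le> L * (R * (1/2)^k)" .
  qed (use Suc.prems in auto)
  also have "\<dots> \<le> (L * (R * (1/2)^k)) * h"
    using Suc.prems L0 R0 by (intro mult_left_mono) auto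
  also have "\<dots> = (h * L) * (R * (1/2)^k)" by simp
  also have "\<dots> \<le> (1/2) * (R * (1/2)^k)"
    using hL R0 by (intro mult_right_mono) auto
  finally show ?case by simp
qed

lemma picard_converges: "\<exists>x. uniform_limit {0..h} (picard G y0) x sequentially"
proof -
  define d where "d i t = picard G y0 (Suc i) t - picard G y0 i t" for i t
  have "uniform_limit {0..h} (\<lambda>n t. \<Sum>i<n. d i t) (\<lambda>t. \<Sum>i. d i t) sequentially"
    using picard_step_bound unfolding d_def
    by (intro Weierstrass_m_test[of _ _ "\<lambda>i. R * (1/2)^i"]) (auto intro!: summable_mult summable_geometric)
  moreover have "picard G y0 n t = y0 + (\<Sum>i<n. d i t)" for n t
    using sum_lessThan_telescope[of "\<lambda>i. picard G y0 i t" n] by (simp add: d_def)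
  ultimately have "uniform_limit {0..h} (picard G y0) (\<lambda>t. y0 + (\<Sum>i. d i t)) sequentially"
    unfolding uniform_limit_iff by (simp add: dist_norm)
  then show ?thesis by blast
qed

context
  fixes x assumes ul: "uniform_limit {0..h} (picard G y0) x sequentially"
begin

lemma picard_limit_in_cball: "t \<in> {0..h} \<Longrightarrow> x t \<in> cball y0 R"
  by (rule Lim_in_closed_set[OF closed_cball _ _ tendsto_uniform_limitI[OF ul]])
    (use picard_continuous_in_cball in auto)

lemma picard_limit_integral_equation:
  assumes t: "t \<in> {0..h}"
  shows "x t = y0 + integral {0..t} (\<lambda>s. G s (x s))"
proof -
  let ?P = "picard G y0"
  have ulG: "uniform_limit {0..t} (\<lambda>n s. G s (?P n s)) (\<lambda>s. G s (x s)) sequentially"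
  proof (rule uniform_limitI)
    fix e :: real assume e: "e > 0"
    have "\<forall>\<^sub>F n in sequentially. \<forall>s\<in>{0..h}. dist (?P n s) (x s) < e / (L + 1)"
      using uniform_limitD[OF ul] e L0 by simp
    then show "\<forall>\<^sub>F n in sequentially. \<forall>s\<in>{0..t}. dist (G s (?P n s)) (G s (x s)) < e"
    proof (rule eventually_mono, intro ballI)
      fix n s assume close: "\<forall>s\<in>{0..h}. dist (?P n s) (x s) < e / (L + 1)" and "s \<in> {0..t}"
      then have sh: "s \<in> {0..h}" using t by auto
      have "dist (G s (?P n s)) (G s (x s)) \<le> L * dist (?P n s) (x s)"
        unfolding dist_norm using picard_continuous_in_cball picard_limit_in_cball sh by (intro lG) auto
      also have "\<dots> \<le> L * (e / (L + 1))"
        using close sh L0 by (intro mult_left_mono) (auto simp: less_imp_le)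
      also have "\<dots> < e" using e L0 by (simp add: field_simps)
      finally show "dist (G s (?P n s)) (G s (x s)) < e" .
    qed
  qed
  have cP: "continuous_on {0..t} (\<lambda>s. G s (?P n s))" for n
    by (rule continuous_on_subset[OF continuous_on_G_picard]) (use t in auto)
  obtain I J where I: "\<And>n. ((\<lambda>s. G s (?P n s)) has_integral I n) {0..t}"
    and J: "((\<lambda>s. G s (x s)) has_integral J) {0..t}" and IJ: "I \<longlonglongrightarrow> J"
    using uniform_limit_integral[OF ulG cP sequentially_bot] by blast
  have "(\<lambda>n. ?P (Suc n) t) \<longlonglongrightarrow> y0 + J"
    using IJ by (simp add: picard_Suc integral_unique[OF I] tendsto_add)
  moreover have "(\<lambda>n. ?P (Suc n) t) \<longlonglongrightarrow> x t"
    using tendsto_uniform_limitI[OF ul t] by (rule LIMSEQ_Suc)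
  ultimately have "x t = y0 + J" using LIMSEQ_unique by blast
  then show ?thesis using integral_unique[OF J] by simp
qed

end

lemma ode_solution_exists:
  "\<exists>x. x 0 = y0 \<and> (\<forall>t\<in>{0..h}. (x has_vector_derivative G t (x t)) (at t within {0..h}))
      \<and> (\<forall>t\<in>{0..h}. x t \<in> cball y0 R)"
proof -
  obtain x where ul: "uniform_limit {0..h} (picard G y0) x sequentially"
    using picard_converges by blast
  have "continuous_on {0..h} x"
    by (rule uniform_limit_theorem[OF _ ul]) (use picard_continuous_in_cball in auto)
  then have cgx: "continuous_on {0..h} (\<lambda>s. G s (x s))"
    using cG picard_limit_in_cball[OF ul] by blast
  show ?thesis
  proof (intro exI conjI ballI)
    show "x 0 = y0" using picard_limit_integral_equation[OF ul, of 0] h by simp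
    fix t assume t: "t \<in> {0..h}"
    show "(x has_vector_derivative G t (x t)) (at t within {0..h})"
      by (rule has_vector_derivative_transform[OF t picard_limit_integral_equation[OF ul]
            has_vector_derivative_integral_from_0[OF cgx t]])
    show "x t \<in> cball y0 R" using picard_limit_in_cball[OF ul t] .
  qed
qed

end

lemma vector_derivative_increment_bound:
  fixes \<phi> :: "real \<Rightarrow> 'a::real_normed_vector"
  assumes "\<And>s. s \<in> {0..h} \<Longrightarrow> (\<phi> has_vector_derivative \<phi>' s) (at s within {0..h})"
    and "\<And>s. s \<in> {0..t} \<Longrightarrow> norm (\<phi>' s) \<le> K" and t: "t \<in> {0..h}"
  shows "norm (\<phi> t - \<phi> 0) \<le> K * t"
proof -
  have "norm (\<phi> t - \<phi> 0) \<le> K * norm (t - 0)"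
  proof (rule differentiable_bound[OF convex_real_interval(5)])
    show "(\<phi> has_derivative (\<lambda>r. r *\<^sub>R \<phi>' s)) (at s within {0..t})" if "s \<in> {0..t}" for s
      using has_vector_derivative_within_subset[OF assms(1), of s "{0..t}"] that t
      unfolding has_vector_derivative_def by auto
    show "onorm (\<lambda>r. r *\<^sub>R \<phi>' s) \<le> K" if "s \<in> {0..t}" for s
    proof (rule onorm_le)
      fix r :: real
      have "\<bar>r\<bar> * norm (\<phi>' s) \<le> \<bar>r\<bar> * K" using assms(2)[OF that] by (rule mult_left_mono) simp
      then show "norm (r *\<^sub>R \<phi>' s) \<le> K * norm r" by (simp add: mult.commute)
    qed
  qed (use t in auto)
  then show ?thesis using t by simp
qed

lemma has_derivative_if_quadratic_remainder:
  fixes f :: "'a::euclidean_space \<Rightarrow> 'b::real_normed_vector"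
  assumes M: "linear M" and r: "r > 0"
    and rem: "\<And>z. z \<in> ball y r \<Longrightarrow> norm (f z - f y - M (z - y)) \<le> D * (norm (z - y))\<^sup>2"
  shows "(f has_derivative M) (at y)"
  unfolding has_derivative_at_alt
proof (intro conjI allI impI)
  show "bounded_linear M" using M linear_conv_bounded_linear by blast
  fix e :: real assume e: "e > 0"
  show "\<exists>d>0. \<forall>z. norm (z - y) < d \<longrightarrow> norm (f z - f y - M (z - y)) \<le> e * norm (z - y)"
  proof (intro exI[of _ "min r (e / (\<bar>D\<bar> + 1))"] conjI allI impI)
    show "0 < min r (e / (\<bar>D\<bar> + 1))" using e r by simp
    fix z assume z: "norm (z - y) < min r (e / (\<bar>D\<bar> + 1))"
    have "norm (z - y) * (\<bar>D\<bar> + 1) < e"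
      using z by (simp add: pos_less_divide_eq)
    moreover have "\<bar>D\<bar> * norm (z - y) \<le> norm (z - y) * (\<bar>D\<bar> + 1)"
      by (simp add: algebra_simps)
    ultimately have Dz: "\<bar>D\<bar> * norm (z - y) \<le> e" by linarith
    have "norm (f z - f y - M (z - y)) \<le> D * (norm (z - y))\<^sup>2"
      using z by (intro rem) (simp add: dist_norm norm_minus_commute)
    also have "\<dots> \<le> (\<bar>D\<bar> * norm (z - y)) * norm (z - y)"
      by (simp add: power2_eq_square mult.assoc mult_right_mono)
    also have "\<dots> \<le> e * norm (z - y)" using Dz by (intro mult_right_mono) auto
    finally show "norm (f z - f y - M (z - y)) \<le> e * norm (z - y)" .
  qed
qed

section \<open>Flows of vector fields preserving a bilinear form\<close>

text \<open>\<open>A_skew\<close> says that every \<open>A y\<close> is infinitesimally skew for the form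
  \<open>(a, b) \<mapsto> a \<bullet> \<Omega> b\<close>, so the flow preserves it; for Hamiltonian fields \<open>\<Omega> = J\<close>.\<close>
locale form_preserving_field =
  fixes F :: "'a::euclidean_space \<Rightarrow> 'a" and A :: "'a \<Rightarrow> 'a \<Rightarrow> 'a" and \<Omega> :: "'a \<Rightarrow> 'a"
  assumes F_has_derivative: "\<And>y. (F has_derivative A y) (at y)"
    and A_continuous: "\<And>b. b \<in> Basis \<Longrightarrow> continuous_on UNIV (\<lambda>y. A y b)"
    and A_lipschitz: "\<And>R. \<exists>L\<ge>0. \<forall>y\<in>cball 0 R. \<forall>z\<in>cball 0 R. \<forall>v.
                        norm (A y v - A z v) \<le> L * norm (y - z) * norm v"
    and \<Omega>_linear: "linear \<Omega>"
    and A_skew: "\<And>y a b. A y a \<bullet> \<Omega> b + a \<bullet> \<Omega> (A y b) = 0"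
begin

lemma A_linear: "linear (A y)"
  using F_has_derivative has_derivative_bounded_linear bounded_linear.linear by blast

lemma A_eq_sum_Basis: "A y v = (\<Sum>b\<in>Basis. (v \<bullet> b) *\<^sub>R A y b)"
proof -
  have "A y v = A y (\<Sum>b\<in>Basis. (v \<bullet> b) *\<^sub>R b)" by (simp add: euclidean_representation)
  also have "\<dots> = (\<Sum>b\<in>Basis. (v \<bullet> b) *\<^sub>R A y b)"
    by (simp add: linear_sum[OF A_linear] linear_cmul[OF A_linear])
  finally show ?thesis .
qed

lemma continuous_on_A_comp:
  assumes "continuous_on S g" "continuous_on S p"
  shows "continuous_on S (\<lambda>s. A (g s) (p s))"
proof -
  have "continuous_on S (\<lambda>s. \<Sum>b\<in>Basis. (p s \<bullet> b) *\<^sub>R A (g s) b)"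
    by (intro continuous_intros assms continuous_on_compose2[OF A_continuous]) auto
  then show ?thesis by (subst A_eq_sum_Basis) simp
qed

lemma continuous_on_F: "continuous_on S F"
  using F_has_derivative
  by (intro continuous_at_imp_continuous_on ballI) (rule has_derivative_continuous)

lemma A_bounded_on_cball: "\<exists>B\<ge>0. \<forall>y\<in>cball 0 R. \<forall>v. norm (A y v) \<le> B * norm v"
proof -
  obtain K where K: "\<And>v. norm (A 0 v) \<le> norm v * K" "K > 0"
    using bounded_linear.pos_bounded F_has_derivative has_derivative_bounded_linear by blast
  obtain L where L: "L \<ge> 0"
    "\<forall>y\<in>cball 0 \<bar>R\<bar>. \<forall>z\<in>cball 0 \<bar>R\<bar>. \<forall>v. norm (A y v - A z v) \<le> L * norm (y - z) * norm v"
    using A_lipschitz by blast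
  have "norm (A y v) \<le> (K + L * \<bar>R\<bar>) * norm v" if y: "y \<in> cball 0 R" for y v
  proof -
    have "norm (A y v) \<le> norm (A 0 v) + norm (A y v - A 0 v)" by (rule norm_triangle_sub)
    also have "\<dots> \<le> norm v * K + L * norm (y - 0) * norm v"
    proof (rule add_mono)
      have "y \<in> cball 0 \<bar>R\<bar>" "(0::'a) \<in> cball 0 \<bar>R\<bar>" using y by auto
      then show "norm (A y v - A 0 v) \<le> L * norm (y - 0) * norm v" using L(2) by blast
    qed (rule K(1))
    also have "\<dots> \<le> norm v * K + L * \<bar>R\<bar> * norm v"
      using y L by (intro add_mono mult_right_mono mult_left_mono) auto
    finally show ?thesis by (simp add: algebra_simps)
  qed
  moreover have "K + L * \<bar>R\<bar> \<ge> 0" using K L by simp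
  ultimately show ?thesis by blast
qed

lemma F_lipschitz_on_cball: "\<exists>B\<ge>0. \<forall>y\<in>cball 0 R. \<forall>z\<in>cball 0 R. norm (F y - F z) \<le> B * norm (y - z)"
proof -
  obtain B where B: "B \<ge> 0" "\<forall>y\<in>cball 0 R. \<forall>v. norm (A y v) \<le> B * norm v"
    using A_bounded_on_cball by blast
  have "norm (F y - F z) \<le> B * norm (y - z)" if "y \<in> cball 0 R" "z \<in> cball 0 R" for y z
  proof (rule differentiable_bound[OF convex_cball _ _ that])
    show "(F has_derivative A x) (at x within cball 0 R)" for x
      using F_has_derivative has_derivative_at_withinI by blast
    show "onorm (A x) \<le> B" if "x \<in> cball 0 R" for x
      using B that by (intro onorm_le) (simp add: mult.commute)
  qed
  then show ?thesis using B by blast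
qed

lemma F_bounded_on_cball: "\<exists>B\<ge>0. \<forall>y\<in>cball 0 R. norm (F y) \<le> B"
proof -
  have "bounded (F ` cball 0 R)"
    by (intro compact_imp_bounded compact_continuous_image continuous_on_F compact_cball)
  then obtain B where "\<forall>x\<in>F ` cball 0 R. norm x \<le> B" unfolding bounded_iff by blast
  then have "\<forall>y\<in>cball 0 R. norm (F y) \<le> max B 0" by (simp add: le_max_iff_disj)
  then show ?thesis by (intro exI[of _ "max B 0"]) simp
qed

lemma F_taylor_on_cball:
  "\<exists>L\<ge>0. \<forall>y\<in>cball 0 R. \<forall>z\<in>cball 0 R. norm (F z - F y - A y (z - y)) \<le> L * (norm (z - y))\<^sup>2"
proof -
  obtain L where L: "L \<ge> 0"
    "\<forall>y\<in>cball 0 R. \<forall>z\<in>cball 0 R. \<forall>v. norm (A y v - A z v) \<le> L * norm (y - z) * norm v"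
    using A_lipschitz by blast
  have "norm (F z - F y - A y (z - y)) \<le> norm (z - y) * (L * norm (z - y))"
    if y: "y \<in> cball 0 R" and z: "z \<in> cball 0 R" for y z
  proof (rule differentiable_bound_linearization[of y z "closed_segment y z" F A y])
    show "y + t *\<^sub>R (z - y) \<in> closed_segment y z" if "t \<in> {0..1}" for t
      using that by (auto simp: closed_segment_def algebra_simps intro!: exI[of _ t])
    show "(F has_derivative A x) (at x within closed_segment y z)" for x
      using F_has_derivative has_derivative_at_withinI by blast
    show "onorm (A x - A y) \<le> L * norm (z - y)" if x: "x \<in> closed_segment y z" for x
    proof (rule onorm_le)
      fix v
      have "x \<in> cball 0 R" using x y z convex_cball closed_segment_subset by blast
      then have "norm ((A x - A y) v) \<le> L * norm (x - y) * norm v" using L(2) y by simp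
      also have "\<dots> \<le> L * norm (z - y) * norm v"
        using dist_in_closed_segment[OF x] L
        by (intro mult_right_mono mult_left_mono) (auto simp: dist_norm norm_minus_commute)
      finally show "norm ((A x - A y) v) \<le> L * norm (z - y) * norm v" .
    qed
  qed auto
  then show ?thesis using L by (intro exI[of _ L]) (simp add: power2_eq_square algebra_simps)
qed

definition solves :: "'a \<Rightarrow> real \<Rightarrow> (real \<Rightarrow> 'a) \<Rightarrow> bool" where
  "solves y h x \<longleftrightarrow> x 0 = y \<and> (\<forall>t\<in>{0..h}. (x has_vector_derivative F (x t)) (at t within {0..h}))"

definition flow_map :: "real \<Rightarrow> 'a \<Rightarrow> 'a" where
  "flow_map h y = (THE w. \<exists>x. solves y h x \<and> x h = w)"

lemma solves_unique:
  assumes "solves y h x1" "solves y h x2" "t \<in> {0..h}"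
  shows "x1 t = x2 t"
proof (rule ode_solution_unique[of h "\<lambda>t. F"])
  show "\<exists>L. \<forall>t\<in>{0..h}. \<forall>x\<in>cball 0 R. \<forall>y\<in>cball 0 R. norm (F x - F y) \<le> L * norm (x - y)" for R
    using F_lipschitz_on_cball by blast
qed (use assms in \<open>auto simp: solves_def\<close>)

lemma flow_map_eq:
  assumes "solves y h x" "h \<ge> 0"
  shows "flow_map h y = x h"
  unfolding flow_map_def
proof (rule the_equality)
  show "\<exists>x'. solves y h x' \<and> x' h = x h" using assms by blast
  fix w assume "\<exists>x'. solves y h x' \<and> x' h = w"
  then show "w = x h" using solves_unique[OF _ assms(1), of _ h] assms(2) by auto
qed

lemma solution_exists_in_cball:
  assumes h: "h > 0" and hBF: "h * BF \<le> 1" and hLF: "h * LF \<le> 1/2" and LF0: "LF \<ge> 0"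
    and BF: "\<forall>a\<in>cball z 1. norm (F a) \<le> BF"
    and LF: "\<forall>a\<in>cball z 1. \<forall>b\<in>cball z 1. norm (F a - F b) \<le> LF * norm (a - b)"
  shows "\<exists>x. solves z h x \<and> (\<forall>t\<in>{0..h}. x t \<in> cball z 1)"
proof -
  have "\<exists>x. x 0 = z \<and> (\<forall>t\<in>{0..h}. (x has_vector_derivative F (x t)) (at t within {0..h}))
         \<and> (\<forall>t\<in>{0..h}. x t \<in> cball z 1)"
  proof (rule ode_solution_exists[where G="\<lambda>t. F" and R=1 and B=BF and L=LF])
    show "continuous_on {0..h} (\<lambda>s. F (p s))" if "continuous_on {0..h} p" for p
      by (rule continuous_on_compose2[OF continuous_on_F that]) auto
  qed (use h hBF hLF LF0 BF LF in auto)
  then show ?thesis unfolding solves_def by blast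
qed

lemma variational_solution_exists:
  assumes h: "h > 0" and cg: "continuous_on {0..h} \<gamma>" and BA0: "BA \<ge> 0"
    and bA: "\<And>t v. t \<in> {0..h} \<Longrightarrow> norm (A (\<gamma> t) v) \<le> BA * norm v" and hBA: "h * BA \<le> 1/2"
  shows "\<exists>m. m 0 = v \<and> (\<forall>t\<in>{0..h}. (m has_vector_derivative A (\<gamma> t) (m t)) (at t within {0..h}))
            \<and> (\<forall>t\<in>{0..h}. m t \<in> cball v (norm v))"
proof (rule ode_solution_exists[where G="\<lambda>t m. A (\<gamma> t) m" and R="norm v" and B="BA * (2 * norm v)" and L=BA])
  show "continuous_on {0..h} (\<lambda>s. A (\<gamma> s) (p s))" if "continuous_on {0..h} p" for p
    by (rule continuous_on_A_comp[OF cg that])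
  show "norm (A (\<gamma> t) x) \<le> BA * (2 * norm v)" if "t \<in> {0..h}" "x \<in> cball v (norm v)" for t x
  proof -
    have "norm x \<le> 2 * norm v"
      using that(2) norm_triangle_sub[of x v] by (simp add: dist_norm norm_minus_commute)
    then show ?thesis using bA[OF that(1), of x] BA0 by (meson mult_left_mono order_trans)
  qed
  show "norm (A (\<gamma> t) x - A (\<gamma> t) y) \<le> BA * norm (x - y)" if "t \<in> {0..h}" for t x y
    using bA[OF that, of "x - y"] by (simp add: linear_diff[OF A_linear])
  have "h * (BA * (2 * norm v)) = (h * BA) * (2 * norm v)" by simp
  also have "\<dots> \<le> (1/2) * (2 * norm v)" using hBA by (intro mult_right_mono) auto
  finally show "h * (BA * (2 * norm v)) \<le> norm v" by simp
qed (use h BA0 hBA in auto)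

lemma variational_solution_unique:
  assumes bA: "\<And>t v. t \<in> {0..h} \<Longrightarrow> norm (A (\<gamma> t) v) \<le> BA * norm v"
    and d1: "\<forall>t\<in>{0..h}. (m1 has_vector_derivative A (\<gamma> t) (m1 t)) (at t within {0..h})"
    and d2: "\<forall>t\<in>{0..h}. (m2 has_vector_derivative A (\<gamma> t) (m2 t)) (at t within {0..h})"
    and "m1 0 = m2 0" "t \<in> {0..h}"
  shows "m1 t = m2 t"
proof (rule ode_solution_unique[OF _ d1 d2 assms(4,5)])
  show "\<exists>L. \<forall>t\<in>{0..h}. \<forall>x\<in>cball 0 R. \<forall>y\<in>cball 0 R.
          norm (A (\<gamma> t) x - A (\<gamma> t) y) \<le> L * norm (x - y)" for R
    using bA by (intro exI[of _ BA]) (simp add: linear_diff[OF A_linear, symmetric])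
qed

lemma variational_solution_linear:
  assumes bA: "\<And>t v. t \<in> {0..h} \<Longrightarrow> norm (A (\<gamma> t) v) \<le> BA * norm v"
    and m0: "\<And>v. m v 0 = v"
    and md: "\<And>v. \<forall>t\<in>{0..h}. (m v has_vector_derivative A (\<gamma> t) (m v t)) (at t within {0..h})"
    and t: "t \<in> {0..h}"
  shows "linear (\<lambda>v. m v t)"
proof (rule linearI)
  fix v w
  show "m (v + w) t = m v t + m w t"
  proof (rule variational_solution_unique[OF bA md[of "v + w"] _ _ t])
    show "\<forall>s\<in>{0..h}. ((\<lambda>t. m v t + m w t) has_vector_derivative A (\<gamma> s) (m v s + m w s))
            (at s within {0..h})"
      using md[of v] md[of w] by (auto intro!: has_vector_derivative_add simp: linear_add[OF A_linear])
    show "m (v + w) 0 = m v 0 + m w 0" by (simp add: m0)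
  qed
next
  fix c v
  show "m (c *\<^sub>R v) t = c *\<^sub>R m v t"
  proof (rule variational_solution_unique[OF bA md[of "c *\<^sub>R v"] _ _ t])
    show "\<forall>s\<in>{0..h}. ((\<lambda>t. c *\<^sub>R m v t) has_vector_derivative A (\<gamma> s) (c *\<^sub>R m v s))
            (at s within {0..h})"
      using md[of v]
      by (auto intro!: bounded_linear.has_vector_derivative[OF bounded_linear_scaleR_right]
          simp: linear_cmul[OF A_linear])
    show "m (c *\<^sub>R v) 0 = c *\<^sub>R m v 0" by (simp add: m0)
  qed
qed

lemma has_real_derivative_inner_\<Omega>:
  assumes "(f1 has_vector_derivative d1) (at t)" "(f2 has_vector_derivative d2) (at t)"
  shows "((\<lambda>t. f1 t \<bullet> \<Omega> (f2 t)) has_real_derivative (d1 \<bullet> \<Omega> (f2 t) + f1 t \<bullet> \<Omega> d2)) (at t)"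
proof -
  have "bounded_linear \<Omega>" using \<Omega>_linear linear_conv_bounded_linear by blast
  from bounded_linear.has_vector_derivative[OF this assms(2)]
  have "((\<lambda>t. f1 t \<bullet> \<Omega> (f2 t)) has_derivative
          (\<lambda>s. f1 t \<bullet> (s *\<^sub>R \<Omega> d2) + (s *\<^sub>R d1) \<bullet> \<Omega> (f2 t))) (at t)"
    using assms(1) unfolding has_vector_derivative_def by (intro derivative_intros) auto
  then have "((\<lambda>t. f1 t \<bullet> \<Omega> (f2 t)) has_derivative (*) (d1 \<bullet> \<Omega> (f2 t) + f1 t \<bullet> \<Omega> d2)) (at t)"
    by (rule has_derivative_eq_rhs) (simp add: fun_eq_iff algebra_simps)
  then show ?thesis by (simp add: has_field_derivative_def)
qed

text \<open>The skewness of \<open>A\<close> makes \<open>m\<^sub>w \<bullet> \<Omega> m\<^sub>v\<close> constant along the variational equation.\<close>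
lemma variational_form_conserved:
  assumes h: "h > 0"
    and md: "\<And>v. \<forall>t\<in>{0..h}. (m v has_vector_derivative A (\<gamma> t) (m v t)) (at t within {0..h})"
  shows "m w h \<bullet> \<Omega> (m v h) = m w 0 \<bullet> \<Omega> (m v 0)"
proof (rule DERIV_isconst_end[OF h])
  have bl: "bounded_linear \<Omega>" using \<Omega>_linear linear_conv_bounded_linear by blast
  show "continuous_on {0..h} (\<lambda>t. m w t \<bullet> \<Omega> (m v t))"
    by (intro continuous_intros continuous_on_if_has_vector_derivative[OF md]
        continuous_on_compose2[OF linear_continuous_on[OF bl]]) auto
  fix t assume t: "0 < t" "t < h"
  have "((\<lambda>t. m w t \<bullet> \<Omega> (m v t)) has_real_derivative
      (A (\<gamma> t) (m w t) \<bullet> \<Omega> (m v t) + m w t \<bullet> \<Omega> (A (\<gamma> t) (m v t)))) (at t)"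
    by (intro has_real_derivative_inner_\<Omega> has_vector_derivative_at_interior[OF _ t])
      (use md t in auto)
  then show "((\<lambda>t. m w t \<bullet> \<Omega> (m v t)) has_real_derivative 0) (at t)"
    by (simp add: A_skew)
qed

lemma solutions_stay_close:
  assumes hLF: "h * LF \<le> 1/2" and LF0: "LF \<ge> 0"
    and xz: "solves z h xz" and xy: "solves y h xy"
    and xzK: "\<forall>t\<in>{0..h}. xz t \<in> K" and xyK: "\<forall>t\<in>{0..h}. xy t \<in> K"
    and LF: "\<forall>a\<in>K. \<forall>b\<in>K. norm (F a - F b) \<le> LF * norm (a - b)"
    and t: "t \<in> {0..h}"
  shows "(norm (xz t - xy t))\<^sup>2 \<le> 3 * (norm (z - y))\<^sup>2"
proof -
  have dz: "\<forall>t\<in>{0..h}. (xz has_vector_derivative F (xz t)) (at t within {0..h})"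
    and dy: "\<forall>t\<in>{0..h}. (xy has_vector_derivative F (xy t)) (at t within {0..h})"
    using xz xy by (auto simp: solves_def)
  have "(norm (xz t - xy t))\<^sup>2 \<le> exp (2 * LF * t) * ((norm (xz 0 - xy 0))\<^sup>2 + 0 * t)"
  proof (rule gronwall[where u="\<lambda>s. (norm (xz s - xy s))\<^sup>2"])
    show "continuous_on {0..t} (\<lambda>s. (norm (xz s - xy s))\<^sup>2)"
      using t continuous_on_if_has_vector_derivative[OF dz] continuous_on_if_has_vector_derivative[OF dy]
      by (intro continuous_intros) (auto intro: continuous_on_subset)
    fix s assume "0 < s" "s < t"
    then have sh: "0 < s" "s < h" using t by auto
    have "((\<lambda>s. xz s - xy s) has_vector_derivative F (xz s) - F (xy s)) (at s)"
      using has_vector_derivative_at_interior[OF dz[rule_format] sh]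
        has_vector_derivative_at_interior[OF dy[rule_format] sh] sh
      by (intro has_vector_derivative_diff) auto
    from has_real_derivative_norm_squared[OF this]
    show "((\<lambda>s. (norm (xz s - xy s))\<^sup>2) has_real_derivative
            2 * ((xz s - xy s) \<bullet> (F (xz s) - F (xy s)))) (at s)" .
    have "(xz s - xy s) \<bullet> (F (xz s) - F (xy s)) \<le> norm (xz s - xy s) * norm (F (xz s) - F (xy s))"
      by (rule norm_cauchy_schwarz)
    also have "\<dots> \<le> norm (xz s - xy s) * (LF * norm (xz s - xy s))"
      using LF xzK xyK sh by (intro mult_left_mono) auto
    finally show "2 * ((xz s - xy s) \<bullet> (F (xz s) - F (xy s))) \<le> 2 * LF * (norm (xz s - xy s))\<^sup>2 + 0"
      by (simp add: power2_eq_square algebra_simps)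
  qed (use t LF0 in auto)
  also have "\<dots> \<le> exp 1 * (norm (z - y))\<^sup>2"
  proof -
    have "2 * LF * t \<le> 2 * (h * LF)" using t LF0 by (simp add: mult_left_mono mult.commute)
    then have "exp (2 * LF * t) \<le> exp 1" using hLF by simp
    then show ?thesis using xz xy by (simp add: solves_def mult_right_mono)
  qed
  also have "\<dots> \<le> 3 * (norm (z - y))\<^sup>2" using exp_le by (intro mult_right_mono) auto
  finally show ?thesis .
qed

lemma taylor_remainder_along_solutions:
  assumes hLF: "h * LF \<le> 1/2" and LF0: "LF \<ge> 0"
    and xz: "solves z h xz" and xy: "solves y h xy"
    and xzK: "\<forall>t\<in>{0..h}. xz t \<in> K" and xyK: "\<forall>t\<in>{0..h}. xy t \<in> K"
    and LF: "\<forall>a\<in>K. \<forall>b\<in>K. norm (F a - F b) \<le> LF * norm (a - b)"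
    and Tc: "\<forall>a\<in>K. \<forall>b\<in>K. norm (F b - F a - A a (b - a)) \<le> Tc * (norm (b - a))\<^sup>2"
    and Tc0: "Tc \<ge> 0" and s: "s \<in> {0..h}"
  shows "(norm (F (xz s) - F (xy s) - A (xy s) (xz s - xy s)))\<^sup>2 \<le> 9 * Tc\<^sup>2 * (norm (z - y))^4"
proof -
  have "norm (F (xz s) - F (xy s) - A (xy s) (xz s - xy s)) \<le> Tc * (norm (xz s - xy s))\<^sup>2"
    using Tc xzK xyK s by auto
  also have "\<dots> \<le> Tc * (3 * (norm (z - y))\<^sup>2)"
    using solutions_stay_close[OF hLF LF0 xz xy xzK xyK LF s] Tc0 by (intro mult_left_mono)
  finally have "(norm (F (xz s) - F (xy s) - A (xy s) (xz s - xy s)))\<^sup>2 \<le> (Tc * (3 * (norm (z - y))\<^sup>2))\<^sup>2"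
    by (intro power_mono) auto
  then show ?thesis by (simp add: power2_eq_square power4_eq_xxxx algebra_simps)
qed

lemma linearization_error:
  assumes h: "0 < h" "h \<le> 1" and hLF: "h * LF \<le> 1/2" and BA0: "BA \<ge> 0" and LF0: "LF \<ge> 0"
    and xz: "solves z h xz" and xy: "solves y h xy"
    and xzK: "\<forall>t\<in>{0..h}. xz t \<in> K" and xyK: "\<forall>t\<in>{0..h}. xy t \<in> K"
    and LF: "\<forall>a\<in>K. \<forall>b\<in>K. norm (F a - F b) \<le> LF * norm (a - b)"
    and BA: "\<forall>a\<in>K. \<forall>v. norm (A a v) \<le> BA * norm v"
    and Tc: "\<forall>a\<in>K. \<forall>b\<in>K. norm (F b - F a - A a (b - a)) \<le> Tc * (norm (b - a))\<^sup>2"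
    and Tc0: "Tc \<ge> 0" and m0: "m 0 = z - y"
    and md: "\<forall>t\<in>{0..h}. (m has_vector_derivative A (xy t) (m t)) (at t within {0..h})"
  shows "norm (xz h - xy h - m h) \<le> (3 * exp (BA + 1/2) * Tc) * (norm (z - y))\<^sup>2"
proof -
  have dz: "\<forall>t\<in>{0..h}. (xz has_vector_derivative F (xz t)) (at t within {0..h})"
    and dy: "\<forall>t\<in>{0..h}. (xy has_vector_derivative F (xy t)) (at t within {0..h})"
    using xz xy by (auto simp: solves_def)
  define e where "e s = xz s - xy s - m s" for s
  define b where "b = 9 * Tc\<^sup>2 * (norm (z - y))^4"
  have "(norm (e h))\<^sup>2 \<le> exp ((2 * BA + 1) * h) * ((norm (e 0))\<^sup>2 + b * h)"
  proof (rule gronwall[where u="\<lambda>s. (norm (e s))\<^sup>2"])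
    show "continuous_on {0..h} (\<lambda>s. (norm (e s))\<^sup>2)"
      unfolding e_def
      by (intro continuous_intros continuous_on_if_has_vector_derivative[OF dz]
          continuous_on_if_has_vector_derivative[OF dy] continuous_on_if_has_vector_derivative[OF md])
    fix s assume sh: "0 < s" "s < h"
    have "(e has_vector_derivative F (xz s) - F (xy s) - A (xy s) (m s)) (at s)"
      unfolding e_def using sh
        has_vector_derivative_at_interior[OF dz[rule_format] sh]
        has_vector_derivative_at_interior[OF dy[rule_format] sh]
        has_vector_derivative_at_interior[OF md[rule_format] sh]
      by (intro has_vector_derivative_diff) auto
    from has_real_derivative_norm_squared[OF this]
    show "((\<lambda>s. (norm (e s))\<^sup>2) has_real_derivative
            2 * (e s \<bullet> (F (xz s) - F (xy s) - A (xy s) (m s)))) (at s)" .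
    have inK: "xz s \<in> K" "xy s \<in> K" using xzK xyK sh by auto
    define \<rho> where "\<rho> = F (xz s) - F (xy s) - A (xy s) (xz s - xy s)"
    have "A (xy s) (e s) = A (xy s) (xz s - xy s) - A (xy s) (m s)"
      unfolding e_def by (rule linear_diff[OF A_linear])
    then have split: "F (xz s) - F (xy s) - A (xy s) (m s) = A (xy s) (e s) + \<rho>"
      unfolding \<rho>_def by (simp add: algebra_simps)
    have \<rho>b: "(norm \<rho>)\<^sup>2 \<le> b"
      unfolding \<rho>_def b_def using sh
      by (intro taylor_remainder_along_solutions[OF hLF LF0 xz xy xzK xyK LF Tc Tc0]) auto
    have "norm (A (xy s) (e s)) \<le> BA * norm (e s)" using BA inK by auto
    from inner_perturbed_le[OF this, of \<rho>]
    show "2 * (e s \<bullet> (F (xz s) - F (xy s) - A (xy s) (m s)))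
        \<le> (2 * BA + 1) * (norm (e s))\<^sup>2 + b"
      unfolding split using \<rho>b by linarith
  qed (use h BA0 in \<open>auto simp: b_def\<close>)
  also have "\<dots> \<le> exp (2 * BA + 1) * b"
  proof -
    have e0: "e 0 = 0" using xz xy m0 by (simp add: e_def solves_def)
    have "exp ((2 * BA + 1) * h) \<le> exp (2 * BA + 1)"
      using h BA0 mult_left_mono[of h 1 "2 * BA + 1"] by simp
    moreover have "b * h \<le> b" using h by (simp add: b_def mult_left_le)
    ultimately have "exp ((2 * BA + 1) * h) * (b * h) \<le> exp (2 * BA + 1) * b"
      by (rule mult_mono) (use h in \<open>auto simp: b_def\<close>)
    then show ?thesis using e0 by simp
  qed
  also have "\<dots> = ((3 * exp (BA + 1/2) * Tc) * (norm (z - y))\<^sup>2)\<^sup>2"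
  proof -
    have "2 * BA + 1 = (BA + 1/2) + (BA + 1/2)" by simp
    then have "exp (2 * BA + 1) = exp (BA + 1/2) * exp (BA + 1/2)" by (simp only: exp_add)
    then show ?thesis unfolding b_def by algebra
  qed
  finally have "(norm (e h))\<^sup>2 \<le> ((3 * exp (BA + 1/2) * Tc) * (norm (z - y))\<^sup>2)\<^sup>2" .
  then show ?thesis
    unfolding e_def by (rule power2_le_imp_le) (use Tc0 in simp)
qed

lemma norm_le_twice_if_in_cball: "m \<in> cball v (norm v) \<Longrightarrow> norm m \<le> 2 * norm v"
  using norm_triangle_sub[of m v] by (simp add: dist_norm norm_minus_commute)

lemma solves_increment_bound:
  assumes "solves y h x" "\<forall>s\<in>{0..h}. x s \<in> K" "\<forall>a\<in>K. norm (F a) \<le> BF" "t \<in> {0..h}"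
  shows "norm (x t - y) \<le> BF * t"
  using vector_derivative_increment_bound[of h x "\<lambda>s. F (x s)" t BF] assms
  by (auto simp: solves_def)

lemma variational_increment_bound:
  assumes BA0: "BA \<ge> 0" and xK: "\<forall>s\<in>{0..h}. x s \<in> K"
    and BA: "\<forall>a\<in>K. \<forall>v. norm (A a v) \<le> BA * norm v"
    and m0: "m 0 = v" and md: "\<forall>s\<in>{0..h}. (m has_vector_derivative A (x s) (m s)) (at s within {0..h})"
    and mb: "\<forall>s\<in>{0..h}. m s \<in> cball v (norm v)" and t: "t \<in> {0..h}"
  shows "norm (m t - v) \<le> (BA * (2 * norm v)) * t"
proof -
  have "norm (A (x s) (m s)) \<le> BA * (2 * norm v)" if "s \<in> {0..t}" for s
  proof -
    have s: "s \<in> {0..h}" using that t by auto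
    have "norm (A (x s) (m s)) \<le> BA * norm (m s)" using BA xK s by auto
    also have "\<dots> \<le> BA * (2 * norm v)"
      using norm_le_twice_if_in_cball[of "m s" v] mb s BA0 by (intro mult_left_mono) auto
    finally show ?thesis .
  qed
  then show ?thesis
    using vector_derivative_increment_bound[of h m "\<lambda>s. A (x s) (m s)" t] md t m0 by auto
qed

lemma variational_solution_expansion:
  assumes h: "0 < h" and BA0: "BA \<ge> 0" and BF0: "BF \<ge> 0" and L20: "L2 \<ge> 0"
    and xy: "solves y h xy" and xyK: "\<forall>t\<in>{0..h}. xy t \<in> K" and yK: "y \<in> K"
    and BF: "\<forall>a\<in>K. norm (F a) \<le> BF"
    and BA: "\<forall>a\<in>K. \<forall>v. norm (A a v) \<le> BA * norm v"
    and L2: "\<forall>a\<in>K. \<forall>b\<in>K. \<forall>v. norm (A a v - A b v) \<le> L2 * norm (a - b) * norm v"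
    and m0: "m 0 = v"
    and md: "\<forall>t\<in>{0..h}. (m has_vector_derivative A (xy t) (m t)) (at t within {0..h})"
    and mb: "\<forall>t\<in>{0..h}. m t \<in> cball v (norm v)"
  shows "norm (m h - v - h *\<^sub>R A y v) \<le> (2 * L2 * BF + 2 * BA\<^sup>2) * h\<^sup>2 * norm v"
proof -
  define C where "C = 2 * L2 * BF + 2 * BA\<^sup>2"
  have "norm ((m h - v - h *\<^sub>R A y v) - (m 0 - v - 0 *\<^sub>R A y v)) \<le> (C * h * norm v) * h"
  proof (rule vector_derivative_increment_bound[where \<phi>' = "\<lambda>t. A (xy t) (m t) - A y v"])
    show "((\<lambda>t. m t - v - t *\<^sub>R A y v) has_vector_derivative A (xy t) (m t) - A y v) (at t within {0..h})"
      if "t \<in> {0..h}" for t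
      using md that by (auto intro!: derivative_eq_intros)
    fix t assume "t \<in> {0..h}"
    then have t: "t \<in> {0..h}" using h by auto
    have "A (xy t) (m t) - A y v = (A (xy t) (m t) - A y (m t)) + A y (m t - v)"
      by (simp add: linear_diff[OF A_linear])
    also have "norm \<dots> \<le> norm (A (xy t) (m t) - A y (m t)) + norm (A y (m t - v))"
      by (rule norm_triangle_ineq)
    also have "\<dots> \<le> L2 * (BF * t) * (2 * norm v) + BA * ((BA * (2 * norm v)) * t)"
    proof (rule add_mono)
      have "norm (A (xy t) (m t) - A y (m t)) \<le> L2 * norm (xy t - y) * norm (m t)"
        using L2 xyK yK t by auto
      also have "\<dots> \<le> L2 * (BF * t) * (2 * norm v)"
        using solves_increment_bound[OF xy xyK BF t] norm_le_twice_if_in_cball[of "m t" v] mb L20 BF0 t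
        by (intro mult_mono mult_left_mono) auto
      finally show "norm (A (xy t) (m t) - A y (m t)) \<le> L2 * (BF * t) * (2 * norm v)" .
      have "norm (A y (m t - v)) \<le> BA * norm (m t - v)" using BA yK by auto
      also have "\<dots> \<le> BA * ((BA * (2 * norm v)) * t)"
        using variational_increment_bound[OF BA0 xyK BA m0 md mb t] BA0 by (intro mult_left_mono)
      finally show "norm (A y (m t - v)) \<le> BA * ((BA * (2 * norm v)) * t)" .
    qed
    also have "\<dots> = C * t * norm v" by (simp add: C_def power2_eq_square algebra_simps)
    also have "\<dots> \<le> C * h * norm v" using t BA0 BF0 L20
      by (intro mult_right_mono mult_left_mono) (auto simp: C_def)
    finally show "norm (A (xy t) (m t) - A y v) \<le> C * h * norm v" .
  qed (use h in auto)
  then show ?thesis using m0 by (simp add: C_def power2_eq_square algebra_simps)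
qed

text \<open>The derivative of the time-\<open>h\<close> flow at \<open>y\<close> is the time-\<open>h\<close> map of the variational
  equation along the solution through \<open>y\<close>.\<close>
lemma flow_map_derivative_at:
  assumes h: "0 < h" "h \<le> 1" "h * BF \<le> 1" "h * BA \<le> 1/2" "h * LF \<le> 1/2"
    and K: "cball y 2 \<subseteq> K"
    and BF0: "BF \<ge> 0" and BF: "\<forall>a\<in>K. norm (F a) \<le> BF"
    and BA0: "BA \<ge> 0" and BA: "\<forall>a\<in>K. \<forall>v. norm (A a v) \<le> BA * norm v"
    and LF0: "LF \<ge> 0" and LF: "\<forall>a\<in>K. \<forall>b\<in>K. norm (F a - F b) \<le> LF * norm (a - b)"
    and L20: "L2 \<ge> 0"
    and L2: "\<forall>a\<in>K. \<forall>b\<in>K. \<forall>v. norm (A a v - A b v) \<le> L2 * norm (a - b) * norm v"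
    and Tc0: "Tc \<ge> 0"
    and Tc: "\<forall>a\<in>K. \<forall>b\<in>K. norm (F b - F a - A a (b - a)) \<le> Tc * (norm (b - a))\<^sup>2"
  shows "(\<exists>x. solves y h x) \<and>
         (\<exists>M. linear M \<and> (flow_map h has_derivative M) (at y) \<and> (\<forall>v w. M w \<bullet> \<Omega> (M v) = w \<bullet> \<Omega> v) \<and>
            (\<forall>v. norm (M v - v - h *\<^sub>R A y v) \<le> (2 * L2 * BF + 2 * BA\<^sup>2) * h\<^sup>2 * norm v))"
proof -
  have cballK: "cball z 1 \<subseteq> K" if "z \<in> ball y 1" for z
  proof
    fix x assume "x \<in> cball z 1"
    then have "dist y x \<le> 2" using that dist_triangle[of y x z] by simp
    then show "x \<in> K" using K by auto
  qed
  have "\<exists>x. solves z h x \<and> (\<forall>t\<in>{0..h}. x t \<in> cball z 1)" if "z \<in> ball y 1" for z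
    using cballK[OF that] BF LF h LF0 by (intro solution_exists_in_cball) auto
  then obtain X where X': "\<And>z. z \<in> ball y 1 \<Longrightarrow> solves z h (X z) \<and> (\<forall>t\<in>{0..h}. X z t \<in> cball z 1)"
    by metis
  then have X: "\<And>z. z \<in> ball y 1 \<Longrightarrow> solves z h (X z)"
    and XK: "\<And>z. z \<in> ball y 1 \<Longrightarrow> \<forall>t\<in>{0..h}. X z t \<in> K"
    using cballK by blast+
  have y: "y \<in> ball y 1" by simp
  then have yK: "y \<in> K" using K by auto
  have cX: "continuous_on {0..h} (X y)"
    using X[OF y] unfolding solves_def
    by (intro continuous_on_if_has_vector_derivative[where d="\<lambda>t. F (X y t)"]) blast
  have bA: "norm (A (X y t) v) \<le> BA * norm v" if "t \<in> {0..h}" for t v using BA XK[OF y] that by blast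
  obtain m where m0: "\<And>v. m v 0 = v"
    and md: "\<And>v. \<forall>t\<in>{0..h}. (m v has_vector_derivative A (X y t) (m v t)) (at t within {0..h})"
    and mb: "\<And>v. \<forall>t\<in>{0..h}. m v t \<in> cball v (norm v)"
    using variational_solution_exists[OF h(1) cX BA0 bA h(4)] by metis
  define M where "M v = m v h" for v
  have linM: "linear M"
    unfolding M_def[abs_def] using variational_solution_linear[OF bA m0 md] h by auto
  have "norm (flow_map h z - flow_map h y - M (z - y)) \<le> (3 * exp (BA + 1/2) * Tc) * (norm (z - y))\<^sup>2"
    if z: "z \<in> ball y 1" for z
    using linearization_error[OF h(1,2,5) BA0 LF0 X[OF z] X[OF y] XK[OF z] XK[OF y] LF BA Tc Tc0 m0 md]
      flow_map_eq[OF X[OF z]] flow_map_eq[OF X[OF y]] h by (simp add: M_def)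
  then have "(flow_map h has_derivative M) (at y)"
    by (intro has_derivative_if_quadratic_remainder[OF linM zero_less_one])
  moreover have "M w \<bullet> \<Omega> (M v) = w \<bullet> \<Omega> v" for v w
    unfolding M_def using variational_form_conserved[OF h(1) md] m0 by simp
  moreover have "norm (M v - v - h *\<^sub>R A y v) \<le> (2 * L2 * BF + 2 * BA\<^sup>2) * h\<^sup>2 * norm v" for v
    unfolding M_def
    by (rule variational_solution_expansion[OF h(1) BA0 BF0 L20 X[OF y] XK[OF y] yK BF BA L2 m0 md mb])
  ultimately show ?thesis using linM X[OF y] by blast
qed

lemma flow_map_derivative_near_identity:
  "\<exists>h1>0. \<exists>C\<ge>0. \<exists>BA\<ge>0. \<forall>h\<in>{0<..<h1}. \<forall>y\<in>ball y0 1.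
     (\<exists>x. solves y h x) \<and> (\<forall>v. norm (A y v) \<le> BA * norm v) \<and>
     (\<exists>M. linear M \<and> (flow_map h has_derivative M) (at y) \<and> (\<forall>v w. M w \<bullet> \<Omega> (M v) = w \<bullet> \<Omega> v) \<and>
        (\<forall>v. norm (M v - v - h *\<^sub>R A y v) \<le> C * h\<^sup>2 * norm v))"
proof -
  define K where "K = cball (0::'a) (norm y0 + 3)"
  obtain BF where BF0: "BF \<ge> 0" and BF: "\<forall>a\<in>K. norm (F a) \<le> BF"
    using F_bounded_on_cball unfolding K_def by blast
  obtain BA where BA0: "BA \<ge> 0" and BA: "\<forall>a\<in>K. \<forall>v. norm (A a v) \<le> BA * norm v"
    using A_bounded_on_cball unfolding K_def by blast
  obtain LF where LF0: "LF \<ge> 0" and LF: "\<forall>a\<in>K. \<forall>b\<in>K. norm (F a - F b) \<le> LF * norm (a - b)"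
    using F_lipschitz_on_cball unfolding K_def by blast
  obtain L2 where L20: "L2 \<ge> 0"
    and L2: "\<forall>a\<in>K. \<forall>b\<in>K. \<forall>v. norm (A a v - A b v) \<le> L2 * norm (a - b) * norm v"
    using A_lipschitz unfolding K_def by blast
  obtain Tc where Tc0: "Tc \<ge> 0"
    and Tc: "\<forall>a\<in>K. \<forall>b\<in>K. norm (F b - F a - A a (b - a)) \<le> Tc * (norm (b - a))\<^sup>2"
    using F_taylor_on_cball unfolding K_def by blast
  define h1 where "h1 = 1 / (2 * (BF + BA + LF + 1))"
  have "h1 > 0" using BF0 BA0 LF0 by (simp add: h1_def)
  moreover have "(\<exists>x. solves y h x) \<and> (\<forall>v. norm (A y v) \<le> BA * norm v) \<and>
     (\<exists>M. linear M \<and> (flow_map h has_derivative M) (at y) \<and> (\<forall>v w. M w \<bullet> \<Omega> (M v) = w \<bullet> \<Omega> v) \<and>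
        (\<forall>v. norm (M v - v - h *\<^sub>R A y v) \<le> (2 * L2 * BF + 2 * BA\<^sup>2) * h\<^sup>2 * norm v))"
    if h: "h \<in> {0<..<h1}" and y: "y \<in> ball y0 1" for h y
  proof -
    have "h * (2 * (BF + BA + LF + 1)) < 1" using h BF0 BA0 LF0 by (simp add: h1_def field_simps)
    then have "2 * (h * BF) + 2 * (h * BA) + 2 * (h * LF) + 2 * h < 1" by (simp add: algebra_simps)
    moreover have "0 \<le> h * BF" "0 \<le> h * BA" "0 \<le> h * LF" using h BF0 BA0 LF0 by auto
    ultimately have hs: "h \<le> 1" "h * BF \<le> 1" "h * BA \<le> 1/2" "h * LF \<le> 1/2"
      using h by auto
    have K: "cball y 2 \<subseteq> K"
    proof
      fix a assume "a \<in> cball y 2"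
      then have "norm a \<le> norm y + 2" using norm_triangle_sub[of a y] by (simp add: dist_norm norm_minus_commute)
      moreover have "norm y \<le> norm y0 + 1" using y norm_triangle_sub[of y y0] by (simp add: dist_norm norm_minus_commute)
      ultimately show "a \<in> K" by (simp add: K_def)
    qed
    then have "y \<in> K" by auto
    then have "\<forall>v. norm (A y v) \<le> BA * norm v" using BA by auto
    with flow_map_derivative_at[OF _ hs K BF0 BF BA0 BA LF0 LF L20 L2 Tc0 Tc] h show ?thesis by simp
  qed
  moreover have "2 * L2 * BF + 2 * BA\<^sup>2 \<ge> 0" using BF0 L20 by simp
  ultimately show ?thesis using BA0 by blast
qed

end

section \<open>Hamiltonian vector fields\<close>

lemma Jinv_linear: "linear Jinv"
  by (intro linearI) (auto simp: Jinv_def)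

lemma Jmat_linear: "linear Jmat"
  by (intro linearI) (auto simp: Jmat_def)

lemma norm_Jinv [simp]: "norm (Jinv x) = norm x"
  by (simp add: Jinv_def norm_prod_def add.commute)

lemma norm_Jmat [simp]: "norm (Jmat x) = norm x"
  by (simp add: Jmat_def norm_prod_def add.commute)

lemma Jmat_Jinv [simp]: "Jmat (Jinv x) = x"
  by (simp add: Jmat_def Jinv_def)

lemma inner_Jinv_Jmat: "Jinv u \<bullet> Jmat b = - (u \<bullet> b)"
  by (simp add: Jmat_def Jinv_def inner_prod_def)

lemma inner_Jinv_right: "u \<bullet> Jinv x = - (Jinv u \<bullet> x)"
  by (simp add: Jinv_def inner_prod_def inner_commute)

lemma inner_Jmat_left: "Jmat a \<bullet> b = - (a \<bullet> Jmat b)"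
  by (simp add: Jmat_def inner_prod_def inner_commute)

lemma hamiltonian_field_form_preserving:
  fixes H :: "(real^'n) \<times> (real^'n) \<Rightarrow> real"
  assumes "smooth H"
  shows "form_preserving_field (\<lambda>y. Jinv (grad H y)) (\<lambda>y v. Jinv (hess H y v)) Jmat"
proof -
  have C2: "Ck_on 2 UNIV H" and C3: "Ck_on 3 UNIV H" using assms unfolding smooth_def by auto
  have bl: "bounded_linear Jinv" using Jinv_linear linear_conv_bounded_linear by blast
  have cont: "continuous_on UNIV (\<lambda>y. Jinv (hess H y b))" if "b \<in> Basis" for b
  proof -
    have "continuous_on UNIV (pdiff c (pdiff b' H))" if "b' \<in> Basis" "c \<in> Basis" for b' c
      using Ck_on_continuous_on[OF C2, of "[c,b']"] that by simp
    then show ?thesis unfolding hess_def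
      by (intro continuous_on_compose2[OF linear_continuous_on[OF bl]] continuous_intros) auto
  qed
  have lip: "\<exists>L\<ge>0. \<forall>y\<in>cball 0 R. \<forall>z\<in>cball 0 R. \<forall>v.
          norm (Jinv (hess H y v) - Jinv (hess H z v)) \<le> L * norm (y - z) * norm v" for R
    using hess_locally_lipschitz[OF C3, of R] by (simp add: linear_diff[OF Jinv_linear, symmetric])
  have skew: "Jinv (hess H y a) \<bullet> Jmat b + a \<bullet> Jmat (Jinv (hess H y b)) = 0" for y a b
    using hess_self_adjoint[OF C2 open_UNIV UNIV_I, of y a b] by (simp add: inner_Jinv_Jmat)
  have der: "((\<lambda>y. Jinv (grad H y)) has_derivative (\<lambda>v. Jinv (hess H y v))) (at y)" for y
    using bounded_linear.has_derivative[OF bl grad_has_derivative_hess[OF C2 open_UNIV UNIV_I]] .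
  show ?thesis
    by (rule form_preserving_field.intro[OF der cont lip Jmat_linear skew])
qed

lemma hamiltonian_solves_eq:
  assumes "smooth H"
  shows "form_preserving_field.solves (\<lambda>y. Jinv (grad H y)) = flow_sol H"
    and "form_preserving_field.flow_map (\<lambda>y. Jinv (grad H y)) = flow H"
proof -
  interpret form_preserving_field "\<lambda>y. Jinv (grad H y)" "\<lambda>y v. Jinv (hess H y v)" Jmat
    using hamiltonian_field_form_preserving[OF assms] .
  show "solves = flow_sol H" by (simp add: fun_eq_iff solves_def flow_sol_def)
  then show "flow_map = flow H" by (simp add: fun_eq_iff flow_map_def flow_def)
qed

lemma flow_eq_solution:
  assumes "smooth H" "flow_sol H y h x" "h \<ge> 0"
  shows "flow H h y = x h"
proof -
  interpret form_preserving_field "\<lambda>y. Jinv (grad H y)" "\<lambda>y v. Jinv (hess H y v)" Jmat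
    using hamiltonian_field_form_preserving[OF assms(1)] .
  show ?thesis
    using flow_map_eq[of y h x] assms hamiltonian_solves_eq[OF assms(1)] by simp
qed

section \<open>The antisymmetric part of the derivative of the difference quotient field\<close>

lemma norm_le_of_inner_bound:
  fixes T :: "'a::real_inner"
  assumes "\<And>w. \<bar>w \<bullet> T\<bar> \<le> c * norm w" and "c \<ge> 0"
  shows "norm T \<le> c"
proof (cases "T = 0")
  case False
  have "norm T * norm T \<le> c * norm T"
    using assms(1)[of T] by (simp add: power2_norm_eq_inner[symmetric] power2_eq_square)
  then show ?thesis using False by simp
qed (use assms(2) in simp)

lemma inner_Jmat_perturbation_bound:
  assumes "\<And>u. norm (K u - A u) \<le> c * norm u" "\<And>u. norm (K u) \<le> bK * norm u"
    and "\<And>u. norm (A u) \<le> bA * norm u" and "c \<ge> 0" "bA \<ge> 0"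
  shows "\<bar>K w \<bullet> Jmat (K v) - A w \<bullet> Jmat (A v)\<bar> \<le> c * (bK + bA) * norm w * norm v"
proof -
  have "K w \<bullet> Jmat (K v) - A w \<bullet> Jmat (A v) = (K w - A w) \<bullet> Jmat (K v) + A w \<bullet> Jmat (K v - A v)"
    by (simp add: linear_diff[OF Jmat_linear] inner_diff_left inner_diff_right)
  also have "\<bar>\<dots>\<bar> \<le> \<bar>(K w - A w) \<bullet> Jmat (K v)\<bar> + \<bar>A w \<bullet> Jmat (K v - A v)\<bar>"
    by (rule abs_triangle_ineq)
  also have "\<dots> \<le> norm (K w - A w) * norm (K v) + norm (A w) * norm (K v - A v)"
    using Cauchy_Schwarz_ineq2[of "K w - A w" "Jmat (K v)"] Cauchy_Schwarz_ineq2[of "A w" "Jmat (K v - A v)"]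
    by (intro add_mono) simp_all
  also have "\<dots> \<le> (c * norm w) * (bK * norm v) + (bA * norm w) * (c * norm v)"
    using assms by (intro add_mono mult_mono) auto
  finally show ?thesis by (simp add: algebra_simps)
qed

text \<open>Write \<open>M = I + h K\<close> with \<open>K = J\<^sup>-\<^sup>1 S + O(h)\<close>. Symplecticity of \<open>M\<close> says that the
  antisymmetric part of \<open>J K\<close> equals \<open>-(h/2) K\<^sup>T J K\<close>, which is \<open>(h/2) S J\<^sup>-\<^sup>1 S + O(h\<^sup>2)\<close>.\<close>
lemma antisymmetric_part_of_symplectic_increment:
  fixes M S :: "(real^'n) \<times> (real^'n) \<Rightarrow> (real^'n) \<times> (real^'n)"
  assumes linM: "linear M" and symM: "\<And>v w. M w \<bullet> Jmat (M v) = w \<bullet> Jmat v"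
    and S_sym: "\<And>v w. S v \<bullet> w = v \<bullet> S w"
    and BA: "\<And>v. norm (S v) \<le> BA * norm v" and BA0: "BA \<ge> 0"
    and est: "\<And>v. norm (M v - v - h *\<^sub>R Jinv (S v)) \<le> C * h\<^sup>2 * norm v" and C0: "C \<ge> 0"
    and h: "0 < h" "h \<le> 1"
  defines "D \<equiv> \<lambda>v. Jmat ((1 / h) *\<^sub>R (M v - v))"
  shows "norm ((1/2) *\<^sub>R (D v - adjoint D v) - (h/2) *\<^sub>R S (Jinv (S v)))
           \<le> C * (2 * BA + C) / 2 * h\<^sup>2 * norm v"
proof -
  define A where "A v = Jinv (S v)" for v
  define K where "K v = (1 / h) *\<^sub>R (M v - v)" for v
  have linK: "linear K" unfolding K_def[abs_def]
    by (intro linear_compose_scale_right linear_compose_sub linM linear_ident)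
  have D_K: "D = (\<lambda>v. Jmat (K v))" by (simp add: D_def K_def)
  have linD: "linear D" unfolding D_K using linear_compose[OF linK Jmat_linear] by (simp add: o_def)
  have MK: "M v = v + h *\<^sub>R K v" for v using h by (simp add: K_def)
  have Kest: "norm (K v - A v) \<le> C * h * norm v" for v
  proof -
    have "K v - A v = (1 / h) *\<^sub>R (M v - v - h *\<^sub>R A v)" using h by (simp add: K_def algebra_simps)
    then have "norm (K v - A v) = (1 / h) * norm (M v - v - h *\<^sub>R A v)" using h by simp
    also have "\<dots> \<le> (1 / h) * (C * h\<^sup>2 * norm v)" using est[of v] h by (intro mult_left_mono) (auto simp: A_def)
    also have "\<dots> = C * h * norm v" using h by (simp add: power2_eq_square)
    finally show ?thesis .
  qed
  have Kb: "norm (K v) \<le> (BA + C) * norm v" for v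
  proof -
    have "norm (K v) \<le> norm (A v) + norm (K v - A v)" by (rule norm_triangle_sub)
    also have "\<dots> \<le> BA * norm v + C * h * norm v" using BA[of v] Kest[of v] by (simp add: A_def)
    also have "\<dots> \<le> BA * norm v + C * 1 * norm v"
      using h C0 by (intro add_left_mono mult_right_mono mult_left_mono) auto
    finally show ?thesis by (simp add: algebra_simps)
  qed
  define T where "T = (1/2) *\<^sub>R (D v - adjoint D v) - (h/2) *\<^sub>R S (Jinv (S v))"
  have "\<bar>w \<bullet> T\<bar> \<le> C * (2 * BA + C) / 2 * h\<^sup>2 * norm v * norm w" for w
  proof -
    have "w \<bullet> Jmat v = (w + h *\<^sub>R K w) \<bullet> (Jmat v + h *\<^sub>R Jmat (K v))"
      using symM[where v=v and w=w] by (simp add: MK linear_add[OF Jmat_linear] linear_cmul[OF Jmat_linear])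
    then have "h * (w \<bullet> Jmat (K v) + K w \<bullet> Jmat v + h * (K w \<bullet> Jmat (K v))) = 0"
      by (simp add: inner_add_left inner_add_right algebra_simps)
    then have "w \<bullet> Jmat (K v) + K w \<bullet> Jmat v + h * (K w \<bullet> Jmat (K v)) = 0"
      using h by simp
    then have sy: "w \<bullet> Jmat (K v) + K w \<bullet> Jmat v = - h * (K w \<bullet> Jmat (K v))"
      by linarith
    have adj: "w \<bullet> adjoint D v = - (K w \<bullet> Jmat v)"
      using adjoint_works[OF linD, of w v] by (simp add: D_K inner_Jmat_left)
    have "w \<bullet> S (Jinv (S v)) = S w \<bullet> Jinv (S v)"
      using S_sym[where v=w and w="Jinv (S v)"] by simp
    also have "\<dots> = - (A w \<bullet> S v)" by (simp only: inner_Jinv_right A_def)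
    finally have hs: "w \<bullet> S (Jinv (S v)) = - (A w \<bullet> Jmat (A v))" by (simp add: A_def)
    have eq: "w \<bullet> T = - (h / 2) * (K w \<bullet> Jmat (K v) - A w \<bullet> Jmat (A v))"
      unfolding T_def using sy adj hs by (simp add: inner_diff_right D_K algebra_simps)
    have "\<bar>K w \<bullet> Jmat (K v) - A w \<bullet> Jmat (A v)\<bar> \<le> C * h * ((BA + C) + BA) * norm w * norm v"
      using Kest Kb BA C0 BA0 h by (intro inner_Jmat_perturbation_bound) (auto simp: A_def)
    then have "\<bar>w \<bullet> T\<bar> \<le> (h / 2) * (C * h * ((BA + C) + BA) * norm w * norm v)"
      using eq h by (simp add: abs_mult)
    then show ?thesis by (simp add: power2_eq_square algebra_simps)
  qed
  then show ?thesis
    unfolding T_def by (rule norm_le_of_inner_bound) (use C0 BA0 h in simp)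
qed

lemma flow_field_antisymmetric_part:
  fixes H :: "(real^'n) \<times> (real^'n) \<Rightarrow> real" and ystar :: "(real^'n) \<times> (real^'n)"
  assumes "smooth H"
  shows "\<exists>h1>0. \<exists>C\<ge>0. \<forall>h\<in>{0<..<h1}. \<forall>y\<in>ball ystar 1. (\<exists>x. flow_sol H y h x) \<and>
           (\<exists>D. ((\<lambda>z. Jmat ((1 / h) *\<^sub>R (flow H h z - z))) has_derivative D) (at y) \<and>
              (\<forall>v. norm ((1/2) *\<^sub>R (D v - adjoint D v) - (h / 2) *\<^sub>R hess H y (Jinv (hess H y v)))
                     \<le> C * h\<^sup>2 * norm v))"
proof -
  interpret form_preserving_field "\<lambda>y. Jinv (grad H y)" "\<lambda>y v. Jinv (hess H y v)" Jmat
    using hamiltonian_field_form_preserving[OF assms] .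
  have C2: "Ck_on 2 UNIV H" using assms unfolding smooth_def by blast
  obtain h1 C BA where h1: "h1 > 0" and C0: "C \<ge> 0" and BA0: "BA \<ge> 0" and flow_deriv:
    "\<forall>h\<in>{0<..<h1}. \<forall>y\<in>ball ystar 1. (\<exists>x. flow_sol H y h x) \<and> (\<forall>v. norm (hess H y v) \<le> BA * norm v) \<and>
      (\<exists>M. linear M \<and> (flow H h has_derivative M) (at y) \<and> (\<forall>v w. M w \<bullet> Jmat (M v) = w \<bullet> Jmat v) \<and>
         (\<forall>v. norm (M v - v - h *\<^sub>R Jinv (hess H y v)) \<le> C * h\<^sup>2 * norm v))"
    using flow_map_derivative_near_identity[of ystar] hamiltonian_solves_eq[OF assms] by auto
  have "(\<exists>x. flow_sol H y h x) \<and>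
      (\<exists>D. ((\<lambda>z. Jmat ((1 / h) *\<^sub>R (flow H h z - z))) has_derivative D) (at y) \<and>
        (\<forall>v. norm ((1/2) *\<^sub>R (D v - adjoint D v) - (h / 2) *\<^sub>R hess H y (Jinv (hess H y v)))
               \<le> C * (2 * BA + C) / 2 * h\<^sup>2 * norm v))"
    if h: "h \<in> {0<..<min h1 1}" and y: "y \<in> ball ystar 1" for h y
  proof -
    have hh1: "h \<in> {0<..<h1}" using h by simp
    obtain M where linM: "linear M" and dM: "(flow H h has_derivative M) (at y)"
      and symM: "\<And>v w. M w \<bullet> Jmat (M v) = w \<bullet> Jmat v"
      and estM: "\<And>v. norm (M v - v - h *\<^sub>R Jinv (hess H y v)) \<le> C * h\<^sup>2 * norm v"
      using flow_deriv hh1 y by meson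
    have "((\<lambda>z. Jmat ((1 / h) *\<^sub>R (flow H h z - z))) has_derivative (\<lambda>v. Jmat ((1 / h) *\<^sub>R (M v - v)))) (at y)"
      using Jmat_linear linear_conv_bounded_linear
      by (intro bounded_linear.has_derivative[of Jmat] has_derivative_scaleR_right
          has_derivative_diff dM has_derivative_ident) blast
    moreover have "norm ((1/2) *\<^sub>R (Jmat ((1 / h) *\<^sub>R (M v - v)) - adjoint (\<lambda>v. Jmat ((1 / h) *\<^sub>R (M v - v))) v)
        - (h / 2) *\<^sub>R hess H y (Jinv (hess H y v))) \<le> C * (2 * BA + C) / 2 * h\<^sup>2 * norm v" for v
      using hess_self_adjoint[OF C2 open_UNIV UNIV_I, of y] flow_deriv hh1 y BA0 C0 h
      by (intro antisymmetric_part_of_symplectic_increment[OF linM symM _ _ _ estM]) auto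
    ultimately show ?thesis using flow_deriv hh1 y by blast
  qed
  moreover have "min h1 1 > 0" "C * (2 * BA + C) / 2 \<ge> 0" using h1 C0 BA0 by auto
  ultimately show ?thesis by blast
qed

lemma gradient_field_derivative_self_adjoint:
  assumes g: "Ck_on 2 W g" and W: "open W" "y \<in> W"
    and G: "\<And>z. z \<in> W \<Longrightarrow> G z = grad g z" and D: "(G has_derivative D) (at y)"
  shows "adjoint D = D"
proof -
  have "(G has_derivative hess g y) (at y)"
    using has_derivative_transform_within_open[OF grad_has_derivative_hess[OF g W] W] G by auto
  then have D_hess: "D = hess g y" using has_derivative_unique[OF D] by blast
  have linD: "linear D" using D has_derivative_linear by blast
  have "w \<bullet> adjoint D v = w \<bullet> D v" for v w
    using adjoint_works[OF linD, of w v] hess_self_adjoint[OF g W, of w v] by (simp add: D_hess)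
  then have "adjoint D v = D v" for v by (metis vector_eq_ldot)
  then show ?thesis by (rule ext)
qed

lemma no_modified_hamiltonian:
  fixes H :: "(real^'n) \<times> (real^'n) \<Rightarrow> real" and ystar :: "(real^'n) \<times> (real^'n)"
  assumes sm: "smooth H" and v0: "hess H ystar (Jinv (hess H ystar v0)) \<noteq> 0"
  shows "\<exists>h0>0. \<forall>h\<in>{0<..<h0}. \<forall>W. open W \<and> ystar \<in> W \<longrightarrow>
            \<not> (\<exists>Hh. Ck_on 2 W Hh \<and>
                 (\<forall>y0\<in>W. \<exists>x. flow_sol H y0 h x \<and> Jinv (grad Hh y0) = (1 / h) *\<^sub>R (x h - y0)))"
proof -
  obtain h1 C where h1: "h1 > 0" and C0: "C \<ge> 0" and est:
    "\<forall>h\<in>{0<..<h1}. \<forall>y\<in>ball ystar 1. \<exists>D. ((\<lambda>z. Jmat ((1 / h) *\<^sub>R (flow H h z - z))) has_derivative D) (at y) \<and>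
       (\<forall>v. norm ((1/2) *\<^sub>R (D v - adjoint D v) - (h / 2) *\<^sub>R hess H y (Jinv (hess H y v))) \<le> C * h\<^sup>2 * norm v)"
    using flow_field_antisymmetric_part[OF sm, of ystar] by blast
  define q where "q = norm (hess H ystar (Jinv (hess H ystar v0)))"
  have q: "q > 0" using v0 by (simp add: q_def)
  define h0 where "h0 = min h1 (q / (2 * C * norm v0 + 1))"
  have "2 * C * norm v0 + 1 > 0" using C0 by (simp add: add_nonneg_pos)
  then have h0: "h0 > 0" using h1 q by (simp add: h0_def)
  have False
    if h: "h \<in> {0<..<h0}" and W: "open W" "ystar \<in> W" and Hh: "Ck_on 2 W Hh"
    and rel: "\<forall>y0\<in>W. \<exists>x. flow_sol H y0 h x \<and> Jinv (grad Hh y0) = (1 / h) *\<^sub>R (x h - y0)" for h W Hh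
  proof -
    obtain D where dD: "((\<lambda>z. Jmat ((1 / h) *\<^sub>R (flow H h z - z))) has_derivative D) (at ystar)"
      and bnd: "\<And>v. norm ((1/2) *\<^sub>R (D v - adjoint D v) - (h / 2) *\<^sub>R hess H ystar (Jinv (hess H ystar v)))
                  \<le> C * h\<^sup>2 * norm v"
    proof -
      have "h \<in> {0<..<h1}" "ystar \<in> ball ystar 1" using h by (auto simp: h0_def)
      then show ?thesis using est that by blast
    qed
    have G: "Jmat ((1 / h) *\<^sub>R (flow H h z - z)) = grad Hh z" if "z \<in> W" for z
      using rel that flow_eq_solution[OF sm] h by (metis Jmat_Jinv greaterThanLessThan_iff less_imp_le)
    have "adjoint D = D" by (rule gradient_field_derivative_self_adjoint[OF Hh W G dD])
    then have "(h / 2) * q \<le> C * h\<^sup>2 * norm v0" using bnd[of v0] h by (simp add: q_def)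
    then have "q \<le> h * (2 * C * norm v0)" using h by (simp add: power2_eq_square field_simps)
    moreover have "h * (2 * C * norm v0 + 1) < q"
      using h \<open>2 * C * norm v0 + 1 > 0\<close> by (simp add: h0_def pos_less_divide_eq)
    ultimately show False using h by (simp add: algebra_simps)
  qed
  then show ?thesis using h0 by blast
qed

lemma flow_field_antisymmetric_part_onorm:
  fixes H :: "(real^'n) \<times> (real^'n) \<Rightarrow> real" and ystar :: "(real^'n) \<times> (real^'n)"
  assumes "smooth H"
  shows "\<exists>r>0. \<exists>h1>0. \<exists>C. \<forall>h\<in>{0<..<h1}. \<forall>y\<in>ball ystar r.
           (\<exists>x. flow_sol H y h x) \<and>
           (\<exists>D. ((\<lambda>z. Jmat ((1 / h) *\<^sub>R (flow H h z - z))) has_derivative D) (at y) \<and>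
                onorm (\<lambda>v. (1/2) *\<^sub>R (D v - adjoint D v)
                            - (h / 2) *\<^sub>R hess H y (Jinv (hess H y v))) \<le> C * h^2)"
proof -
  obtain h1 C where "h1 > 0" and "\<forall>h\<in>{0<..<h1}. \<forall>y\<in>ball ystar 1. (\<exists>x. flow_sol H y h x) \<and>
      (\<exists>D. ((\<lambda>z. Jmat ((1 / h) *\<^sub>R (flow H h z - z))) has_derivative D) (at y) \<and>
        (\<forall>v. norm ((1/2) *\<^sub>R (D v - adjoint D v) - (h / 2) *\<^sub>R hess H y (Jinv (hess H y v)))
               \<le> C * h\<^sup>2 * norm v))"
    using flow_field_antisymmetric_part[OF assms, of ystar] by blast
  then show ?thesis
    by (intro exI[of _ 1] exI[of _ h1] exI[of _ C]) (fastforce intro: onorm_le)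
qed

theorem mainTheorem3:
  fixes H :: "(real^'n) \<times> (real^'n) \<Rightarrow> real" and ystar :: "(real^'n) \<times> (real^'n)"
  assumes "smooth H"
    and "(\<lambda>v. hess H ystar (Jinv (hess H ystar v))) \<noteq> (\<lambda>v. 0)"
  shows "(\<exists>h0>0. \<forall>h\<in>{0<..<h0}. \<forall>W. open W \<and> ystar \<in> W \<longrightarrow>
            \<not> (\<exists>Hh. Ck_on 2 W Hh \<and>
                 (\<forall>y0\<in>W. \<exists>x. flow_sol H y0 h x \<and>
                     Jinv (grad Hh y0) = (1 / h) *\<^sub>R (x h - y0))))
       \<and> (\<exists>r>0. \<exists>h1>0. \<exists>C. \<forall>h\<in>{0<..<h1}. \<forall>y\<in>ball ystar r.
            (\<exists>x. flow_sol H y h x) \<and>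
            (\<exists>D. ((\<lambda>z. Jmat ((1 / h) *\<^sub>R (flow H h z - z))) has_derivative D) (at y) \<and>
                 onorm (\<lambda>v. (1/2) *\<^sub>R (D v - adjoint D v)
                             - (h / 2) *\<^sub>R hess H y (Jinv (hess H y v))) \<le> C * h^2))"
proof -
  obtain v0 where "hess H ystar (Jinv (hess H ystar v0)) \<noteq> 0" using assms(2) by (auto simp: fun_eq_iff)
  then show ?thesis
    using no_modified_hamiltonian[OF assms(1)] flow_field_antisymmetric_part_onorm[OF assms(1)] by blast
qed

end
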